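(* For all positive integers $n,d,L$, $|S_n^{(d,L)}|=|S_n^{(L,d)}|$ and $|I_n^{(d,L)}|=|I_n^{(L,d)}|$.
   Context: $S_n^{(d,L)}$ denotes the set of permutations $\pi\in S_n$ that avoid both patterns $d\cdots1(d+1)$ and $1\cdots(L+1)$, and $I_n^{(d,L)}$ its subset of involutions. A permutation avoids $1\cdots(L+1)$ if it has no increasing subsequence of length $L+1$; it avoids $d\cdots1(d+1)$ if (in one-line notation) there are no indices $i_1<\dots<i_{d+1}$ with $\pi(i_1)>\dots>\pi(i_d)$ and $\pi(i_{d+1})>\pi(i_1)$. *)

theory Defs
  imports "HOL-Combinatorics.Permutations"
begin

text \<open>Permutations of [n] are represented as bijections of {0..<n} (identity elsewhere),
  one-line notation p 0, p 1, ..., p (n-1).\<close>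

definition contains_incr :: "nat \<Rightarrow> (nat \<Rightarrow> nat) \<Rightarrow> nat \<Rightarrow> bool" where
  "contains_incr n p k \<longleftrightarrow> (\<exists>f::nat \<Rightarrow> nat. (\<forall>j<k. f j < n) \<and>
      (\<forall>j. Suc j < k \<longrightarrow> f j < f (Suc j) \<and> p (f j) < p (f (Suc j))))"

text \<open>p contains the pattern d ... 1 (d+1): indices i_0 < ... < i_d below n with
  p i_0 > ... > p i_{d-1} and p i_d > p i_0.\<close>
definition contains_dec_pat :: "nat \<Rightarrow> (nat \<Rightarrow> nat) \<Rightarrow> nat \<Rightarrow> bool" where
  "contains_dec_pat n p d \<longleftrightarrow> (\<exists>f::nat \<Rightarrow> nat. (\<forall>j\<le>d. f j < n) \<and>
      (\<forall>j. Suc j \<le> d \<longrightarrow> f j < f (Suc j)) \<and>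
      (\<forall>j. Suc j < d \<longrightarrow> p (f (Suc j)) < p (f j)) \<and>
      p (f 0) < p (f d))"

definition Sdl :: "nat \<Rightarrow> nat \<Rightarrow> nat \<Rightarrow> (nat \<Rightarrow> nat) set" where
  "Sdl n d L = {p. p permutes {0..<n} \<and> \<not> contains_dec_pat n p d \<and> \<not> contains_incr n p (L + 1)}"

definition Idl :: "nat \<Rightarrow> nat \<Rightarrow> nat \<Rightarrow> (nat \<Rightarrow> nat) set" where
  "Idl n d L = {p \<in> Sdl n d L. p \<circ> p = id}"

end

theory Submission
  imports Defs "HOL-Library.Sublist"
begin

text \<open>The proof follows Krattenthaler's growth diagrams for Ferrers boards.  For a permutation
  \<open>\<pi>\<close> let \<open>D\<close> be the board of cells lying strictly south-west of some point of \<open>\<pi>\<close>, and label every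
  lattice point by the partition that Fomin's local rules grow from the points of \<open>\<pi>\<close> to its
  south-west.  At the point \<open>(k, \<pi> k)\<close> this is the RSK shape of the word of points south-west of
  it, so its first row is the longest increasing and its first column the longest decreasing
  such subsequence (Schensted).  Hence \<open>\<pi>\<close> avoids \<open>1\<cdots>(L+1)\<close> and \<open>d\<cdots>1(d+1)\<close> iff every label on the
  border of \<open>D\<close> has first row shorter than \<open>L\<close> and first column shorter than \<open>d\<close>.

  The local rules are invertible, so fillings of \<open>D\<close> correspond to labellings of its border.
  Conjugating all border labels therefore yields a permutation with the same board and the same
  points outside it, with the roles of \<open>d\<close> and \<open>L\<close> exchanged.  This map is injective, and since
  the rules commute with reflection in the diagonal it sends involutions to involutions.\<close>

section \<open>Partitions and Fomin's local rules\<close>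

text \<open>Partitions are encoded by their row lengths, row \<open>0\<close> being the longest.\<close>

definition is_partition :: "(nat \<Rightarrow> nat) \<Rightarrow> bool" where
  "is_partition l \<longleftrightarrow> (\<forall>i. l (Suc i) \<le> l i) \<and> (\<exists>N. \<forall>i\<ge>N. l i = 0)"

definition add_cell :: "(nat \<Rightarrow> nat) \<Rightarrow> nat \<Rightarrow> nat \<Rightarrow> nat" where
  "add_cell l r = l(r := Suc (l r))"

definition cell_step :: "(nat \<Rightarrow> nat) \<Rightarrow> (nat \<Rightarrow> nat) \<Rightarrow> bool" where
  "cell_step l m \<longleftrightarrow> m = l \<or> (\<exists>r. m = add_cell l r \<and> is_partition m)"

definition empty_shape :: "nat \<Rightarrow> nat" where
  "empty_shape = (\<lambda>_. 0)"

lemma is_partition_empty[simp]: "is_partition empty_shape"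
  unfolding is_partition_def empty_shape_def by auto

lemma is_partition_antimono: "is_partition l \<Longrightarrow> i \<le> j \<Longrightarrow> l j \<le> l i"
  unfolding is_partition_def by (metis lift_Suc_antimono_le)

lemma le_add_cell: "l \<le> add_cell l r"
  unfolding add_cell_def le_fun_def by auto

lemma cell_step_le: "cell_step l m \<Longrightarrow> l \<le> m"
  unfolding cell_step_def using le_add_cell by auto

lemma cell_step_partition: "is_partition l \<Longrightarrow> cell_step l m \<Longrightarrow> is_partition m"
  unfolding cell_step_def by auto

lemma cell_step_refl[simp]: "cell_step l l"
  unfolding cell_step_def by auto

lemma cell_step_neqD: "cell_step m p \<Longrightarrow> p \<noteq> m \<Longrightarrow> \<exists>r. p = add_cell m r"
  unfolding cell_step_def by auto

lemma is_partition_max: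
  assumes "is_partition a" "is_partition b"
  shows "is_partition (\<lambda>i. max (a i) (b i))"
proof -
  obtain N M where "\<forall>i\<ge>N. a i = 0" "\<forall>i\<ge>M. b i = 0" using assms unfolding is_partition_def by blast
  then have "\<forall>i\<ge>max N M. max (a i) (b i) = 0" by simp
  moreover have "max (a (Suc i)) (b (Suc i)) \<le> max (a i) (b i)" for i
    using assms unfolding is_partition_def by (simp add: max.coboundedI1 max.coboundedI2)
  ultimately show ?thesis unfolding is_partition_def by blast
qed

lemma is_partition_min:
  assumes "is_partition a" "is_partition b"
  shows "is_partition (\<lambda>i. min (a i) (b i))"
proof -
  obtain N where "\<forall>i\<ge>N. a i = 0" using assms unfolding is_partition_def by blast
  then have "\<forall>i\<ge>N. min (a i) (b i) = 0" by simp
  moreover have "min (a (Suc i)) (b (Suc i)) \<le> min (a i) (b i)" for i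
    using assms unfolding is_partition_def by (simp add: min.coboundedI1 min.coboundedI2)
  ultimately show ?thesis unfolding is_partition_def by blast
qed

lemma add_cell_neq: "add_cell l r \<noteq> l"
  unfolding add_cell_def by (metis fun_upd_same n_not_Suc_n)

lemma add_cell_inj: "add_cell l r = add_cell l s \<Longrightarrow> r = s"
  unfolding add_cell_def by (metis fun_upd_apply n_not_Suc_n)

lemma add_cell_cancel: "add_cell a r = add_cell b r \<Longrightarrow> a = b"
  unfolding add_cell_def by (auto simp: fun_eq_iff split: if_splits)

lemma add_cell_commute: "add_cell (add_cell l r) s = add_cell (add_cell l s) r"
  unfolding add_cell_def by (auto simp: fun_eq_iff)

lemma Least_add_cell_neq: "(LEAST r'. add_cell l r r' \<noteq> l r') = r"
  unfolding add_cell_def by (rule Least_equality) (auto split: if_splits)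

lemma max_add_cell:
  "r \<noteq> s \<Longrightarrow> (\<lambda>i. max (add_cell l r i) (add_cell l s i)) = add_cell (add_cell l r) s"
  unfolding add_cell_def by (auto simp: fun_eq_iff)

lemma min_add_cell: "r \<noteq> s \<Longrightarrow> (\<lambda>i. min (add_cell l r i) (add_cell l s i)) = l"
  unfolding add_cell_def by (auto simp: fun_eq_iff)

lemma add_cell_eq_add_cellD:
  assumes "add_cell m r = add_cell v s" "r \<noteq> s"
  shows "m = add_cell (\<lambda>i. min (m i) (v i)) s" "v = add_cell (\<lambda>i. min (m i) (v i)) r"
proof -
  have other: "m i = v i" if "i \<noteq> r" "i \<noteq> s" for i
    using fun_cong[OF assms(1), of i] that unfolding add_cell_def by auto
  have r: "v r = Suc (m r)" and s: "m s = Suc (v s)"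
    using fun_cong[OF assms(1), of r] fun_cong[OF assms(1), of s] assms(2) unfolding add_cell_def by auto
  have eqs: "m i = add_cell (\<lambda>i. min (m i) (v i)) s i" "v i = add_cell (\<lambda>i. min (m i) (v i)) r i" for i
    using other[of i] r s assms(2) unfolding add_cell_def by (cases "i = r"; cases "i = s"; simp)+
  show "m = add_cell (\<lambda>i. min (m i) (v i)) s" by (rule ext) (fact eqs(1))
  show "v = add_cell (\<lambda>i. min (m i) (v i)) r" by (rule ext) (fact eqs(2))
qed
lemma is_partition_add_cell_0:
  assumes "is_partition l"
  shows "is_partition (add_cell l 0)"
proof -
  obtain N where "\<forall>i\<ge>N. l i = 0" using assms unfolding is_partition_def by blast
  then have "\<forall>i\<ge>Suc N. add_cell l 0 i = 0" unfolding add_cell_def by simp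
  moreover have "add_cell l 0 (Suc i) \<le> add_cell l 0 i" for i
    using assms unfolding is_partition_def add_cell_def by (simp add: le_SucI)
  ultimately show ?thesis unfolding is_partition_def by blast
qed

lemma is_partition_add_cell_Suc:
  assumes "is_partition l" "is_partition (add_cell l r)"
  shows "is_partition (add_cell (add_cell l r) (Suc r))"
proof -
  have a: "l (Suc r) \<le> l r" using assms(1) unfolding is_partition_def by auto
  obtain N where N: "\<forall>i\<ge>N. add_cell l r i = 0" using assms(2) unfolding is_partition_def by auto
  have m: "\<forall>i. add_cell l r (Suc i) \<le> add_cell l r i" using assms(2) unfolding is_partition_def by auto
  show ?thesis unfolding is_partition_def
  proof safe
    fix i
    show "add_cell (add_cell l r) (Suc r) (Suc i) \<le> add_cell (add_cell l r) (Suc r) i"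
      using m[rule_format, of i] a m[rule_format, of "Suc r"]
      by (cases "i = r"; cases "i = Suc r") (auto simp: add_cell_def)
  next
    show "\<exists>N. \<forall>i\<ge>N. add_cell (add_cell l r) (Suc r) i = 0"
      using N by (intro exI[of _ "max N (Suc (Suc r))"]) (auto simp: add_cell_def)
  qed
qed

lemma is_partition_remove_cell:
  assumes "is_partition m" "is_partition (add_cell m (Suc s))"
  shows "is_partition (m(s := m s - 1))" "m = add_cell (m(s := m s - 1)) s"
proof -
  have lt: "m (Suc s) < m s"
    using assms(2) unfolding is_partition_def add_cell_def by (metis fun_upd_apply Suc_le_lessD n_not_Suc_n)
  then show "m = add_cell (m(s := m s - 1)) s" unfolding add_cell_def by auto
  obtain N where "\<forall>i\<ge>N. m i = 0" using assms(1) unfolding is_partition_def by auto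
  then have "\<exists>N. \<forall>i\<ge>N. (m(s := m s - 1)) i = 0" by (intro exI[of _ "max N (Suc s)"]) auto
  moreover have "\<forall>i. (m(s := m s - 1)) (Suc i) \<le> (m(s := m s - 1)) i"
  proof
    fix i
    have "m (Suc i) \<le> m i" using assms(1) unfolding is_partition_def by auto
    then show "(m(s := m s - 1)) (Suc i) \<le> (m(s := m s - 1)) i" using lt by (cases "Suc i = s") auto
  qed
  ultimately show "is_partition (m(s := m s - 1))" unfolding is_partition_def by (rule conjI[rotated])
qed

text \<open>Fomin's forward rule computes the label of the north-east corner of a cell from the
  labels \<open>l\<close> (south-west), \<open>m\<close> (south-east), \<open>v\<close> (north-west) and whether the cell holds a point;
  the backward rule inverts it.\<close>

definition fomin_fwd ::
    "(nat \<Rightarrow> nat) \<Rightarrow> (nat \<Rightarrow> nat) \<Rightarrow> (nat \<Rightarrow> nat) \<Rightarrow> bool \<Rightarrow> (nat \<Rightarrow> nat)" where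
  "fomin_fwd l m v b = (if b then add_cell l 0 else if m = l then v else if v = l then m
     else if m \<noteq> v then (\<lambda>i. max (m i) (v i))
     else add_cell m (Suc (LEAST r. m r \<noteq> l r)))"

definition fomin_bwd ::
    "(nat \<Rightarrow> nat) \<Rightarrow> (nat \<Rightarrow> nat) \<Rightarrow> (nat \<Rightarrow> nat) \<Rightarrow> (nat \<Rightarrow> nat) \<times> bool" where
  "fomin_bwd m v p = (if m = v then
       (if p = m then (m, False) else if p 0 \<noteq> m 0 then (m, True)
        else (let s = (LEAST r. p r \<noteq> m r) in (m(s - 1 := m (s - 1) - 1), False)))
     else (if p = m then (v, False) else if p = v then (m, False)
        else (\<lambda>i. min (m i) (v i), False)))"

lemma fomin_fwd_sym: "fomin_fwd l m v b = fomin_fwd l v m b"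
  unfolding fomin_fwd_def by (auto simp: max.commute)

lemma fomin_fwd_props:
  assumes l: "is_partition l" and lm: "cell_step l m" and lv: "cell_step l v"
    and b: "b \<longrightarrow> m = l \<and> v = l"
  defines "p \<equiv> fomin_fwd l m v b"
  shows "is_partition p \<and> cell_step m p \<and> cell_step v p
     \<and> (p \<noteq> v \<longleftrightarrow> m \<noteq> l \<or> b) \<and> (p \<noteq> m \<longleftrightarrow> v \<noteq> l \<or> b) \<and> fomin_bwd m v p = (l, b)"
proof (cases b)
  case True
  then have "m = l" "v = l" "p = add_cell l 0" using b unfolding p_def fomin_fwd_def by auto
  moreover have "add_cell l 0 0 \<noteq> l 0" unfolding add_cell_def by auto
  ultimately show ?thesis using True is_partition_add_cell_0[OF l] add_cell_neq
    unfolding cell_step_def fomin_bwd_def by auto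
next
  case nb: False
  consider "m = l" | "m \<noteq> l" "v = l" | r s where "m \<noteq> l" "v \<noteq> l" "m = add_cell l r" "v = add_cell l s"
    "is_partition m" "is_partition v"
    using lm lv unfolding cell_step_def by blast
  then show ?thesis
  proof cases
    case 1
    then have "p = v" using nb unfolding p_def fomin_fwd_def by auto
    then show ?thesis using 1 nb l lv cell_step_partition[OF l lv] unfolding fomin_bwd_def by auto
  next
    case 2
    then have "p = m" using nb unfolding p_def fomin_fwd_def by auto
    then show ?thesis using 2 nb lm cell_step_partition[OF l lm] unfolding fomin_bwd_def by auto
  next
    case (3 r s)
    show ?thesis
    proof (cases "r = s")
      case False
      have p: "p = add_cell (add_cell l r) s" using nb 3 False add_cell_inj
        unfolding p_def fomin_fwd_def by (auto simp: max_add_cell)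
      have "is_partition p" using p is_partition_max[OF 3(5,6)] max_add_cell[OF False, of l] 3 by simp
      moreover have "p \<noteq> m" "p \<noteq> v" using p 3 add_cell_neq add_cell_commute by metis+
      moreover have "fomin_bwd m v p = (l, b)" using \<open>p \<noteq> m\<close> \<open>p \<noteq> v\<close> 3 False nb add_cell_inj
        unfolding fomin_bwd_def by (auto simp: min_add_cell)
      ultimately show ?thesis using p 3 add_cell_commute nb unfolding cell_step_def by metis
    next
      case True
      then have mv: "m = v" using 3 by auto
      have p: "p = add_cell m (Suc r)" using nb 3 mv unfolding p_def fomin_fwd_def by (auto simp: Least_add_cell_neq)
      have "p \<noteq> m" "p 0 = m 0" "(LEAST r'. p r' \<noteq> m r') = Suc r"
        using p add_cell_neq Least_add_cell_neq unfolding add_cell_def by auto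
      moreover have "m(r := m r - 1) = l" using 3 unfolding add_cell_def by (auto simp: fun_eq_iff)
      ultimately have "fomin_bwd m v p = (l, b)" using mv nb unfolding fomin_bwd_def by (auto simp: Let_def)
      moreover have "is_partition p" using p 3 is_partition_add_cell_Suc l by auto
      ultimately show ?thesis using p \<open>p \<noteq> m\<close> mv 3 nb unfolding cell_step_def by auto
    qed
  qed
qed

lemma fomin_bwd_props:
  assumes m: "is_partition m" and v: "is_partition v" and p: "is_partition p"
    and mp: "cell_step m p" and vp: "cell_step v p" and lb: "fomin_bwd m v p = (l, b)"
  shows "is_partition l \<and> cell_step l m \<and> cell_step l v \<and> (b \<longrightarrow> m = l \<and> v = l)
     \<and> fomin_fwd l m v b = p"
proof (cases "m = v")
  case mv: True
  show ?thesis
  proof (cases "p = m")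
    case True
    then show ?thesis using mv lb m unfolding fomin_bwd_def fomin_fwd_def by auto
  next
    case pm: False
    obtain r where r: "p = add_cell m r" using cell_step_neqD[OF mp pm] by auto
    show ?thesis
    proof (cases r)
      case 0
      then have "l = m" "b" using lb mv pm r unfolding fomin_bwd_def add_cell_def by auto
      then show ?thesis using mv r 0 m unfolding fomin_fwd_def by auto
    next
      case (Suc s)
      have "p 0 = m 0" "(LEAST r'. p r' \<noteq> m r') = Suc s"
        using r Suc Least_add_cell_neq unfolding add_cell_def by auto
      then have lb': "l = m(s := m s - 1)" "\<not> b" using lb mv pm unfolding fomin_bwd_def by (auto simp: Let_def)
      then have l: "is_partition l" "m = add_cell l s"
        using is_partition_remove_cell[OF m] p r Suc by auto
      then have "fomin_fwd l m v b = p"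
        using lb'(2) mv r Suc add_cell_neq Least_add_cell_neq unfolding fomin_fwd_def by auto
      then show ?thesis using l m mv lb'(2) unfolding cell_step_def by auto
    qed
  qed
next
  case mv: False
  consider "p = m" | "p = v" | "p \<noteq> m" "p \<noteq> v" by blast
  then show ?thesis
  proof cases
    case 1
    then obtain r where "m = add_cell v r" using cell_step_neqD[OF vp] mv by auto
    moreover have "l = v" "\<not> b" using lb 1 mv unfolding fomin_bwd_def by auto
    ultimately show ?thesis using m v 1 mv unfolding cell_step_def fomin_fwd_def by auto
  next
    case 2
    then obtain r where "v = add_cell m r" using cell_step_neqD[OF mp] mv by auto
    moreover have "l = m" "\<not> b" using lb 2 mv unfolding fomin_bwd_def by auto
    ultimately show ?thesis using m v 2 mv unfolding cell_step_def fomin_fwd_def by auto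
  next
    case 3
    have l: "l = (\<lambda>i. min (m i) (v i))" "\<not> b" using lb 3 mv unfolding fomin_bwd_def by auto
    obtain r s where r: "p = add_cell m r" and s: "p = add_cell v s"
      using cell_step_neqD[OF mp] cell_step_neqD[OF vp] 3 by metis
    have rs: "r \<noteq> s" using r s mv add_cell_cancel by metis
    have ml: "m = add_cell l s" and vl: "v = add_cell l r"
      using add_cell_eq_add_cellD[OF trans[OF r[symmetric] s] rs] l(1) by auto
    have "is_partition l" using is_partition_min[OF m v] l(1) by simp
    have "fomin_fwd l m v b = (\<lambda>i. max (m i) (v i))"
      using l(2) mv ml vl add_cell_neq unfolding fomin_fwd_def by auto
    also have "\<dots> = add_cell (add_cell l s) r" using max_add_cell[OF rs[symmetric]] by (simp add: ml vl)
    also have "\<dots> = p" using r ml by simp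
    finally show ?thesis using \<open>is_partition l\<close> ml vl l(2) m v unfolding cell_step_def by blast
  qed
qed

section \<open>Growth diagrams\<close>

definition partial_perm :: "(nat \<times> nat) set \<Rightarrow> bool" where
  "partial_perm X \<longleftrightarrow> (\<forall>a\<in>X. \<forall>b\<in>X. (fst a = fst b \<or> snd a = snd b) \<longrightarrow> a = b)"

lemma partial_permD: "partial_perm X \<Longrightarrow> a \<in> X \<Longrightarrow> b \<in> X \<Longrightarrow> fst a = fst b \<or> snd a = snd b \<Longrightarrow> a = b"
  unfolding partial_perm_def by blast

text \<open>Cell \<open>(a, b)\<close> is the unit square with south-west corner \<open>(a, b)\<close>; \<open>growth X i j\<close> is the label
  of the lattice point \<open>(i, j)\<close>.\<close>

fun growth :: "(nat \<times> nat) set \<Rightarrow> nat \<Rightarrow> nat \<Rightarrow> nat \<Rightarrow> nat" where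
  "growth X 0 j = empty_shape"
| "growth X (Suc i) 0 = empty_shape"
| "growth X (Suc i) (Suc j) = fomin_fwd (growth X i j) (growth X (Suc i) j) (growth X i (Suc j)) ((i, j) \<in> X)"

lemma growth_0_right[simp]: "growth X i 0 = empty_shape"
  by (cases i) auto

definition growth_invariant :: "(nat \<times> nat) set \<Rightarrow> nat \<Rightarrow> nat \<Rightarrow> bool" where
  "growth_invariant X i j \<longleftrightarrow> is_partition (growth X i j) \<and> cell_step (growth X i j) (growth X (Suc i) j)
     \<and> (growth X (Suc i) j \<noteq> growth X i j \<longleftrightarrow> (\<exists>y<j. (i, y) \<in> X))
     \<and> cell_step (growth X i j) (growth X i (Suc j))
     \<and> (growth X i (Suc j) \<noteq> growth X i j \<longleftrightarrow> (\<exists>x<i. (x, j) \<in> X))"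

lemma growth_cell:
  assumes X: "partial_perm X" and g: "growth_invariant X i j"
  defines "l \<equiv> growth X i j" and "m \<equiv> growth X (Suc i) j" and "v \<equiv> growth X i (Suc j)"
    and "p \<equiv> growth X (Suc i) (Suc j)" and "b \<equiv> (i, j) \<in> X"
  shows "is_partition p \<and> cell_step m p \<and> cell_step v p \<and> (p \<noteq> v \<longleftrightarrow> m \<noteq> l \<or> b) \<and> (p \<noteq> m \<longleftrightarrow> v \<noteq> l \<or> b)
     \<and> fomin_bwd m v p = (l, b) \<and> is_partition l \<and> cell_step l m \<and> cell_step l v \<and> (b \<longrightarrow> m = l \<and> v = l)"
proof -
  have bb: "b \<longrightarrow> m = l \<and> v = l"
  proof
    assume b
    have "\<not> (\<exists>y<j. (i, y) \<in> X)"
    proof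
      assume "\<exists>y<j. (i, y) \<in> X"
      then obtain y where "y < j" "(i, y) \<in> X" by auto
      then show False using X \<open>b\<close> unfolding partial_perm_def b_def by (metis fst_conv less_irrefl prod.inject)
    qed
    moreover have "\<not> (\<exists>x<i. (x, j) \<in> X)"
    proof
      assume "\<exists>x<i. (x, j) \<in> X"
      then obtain x where "x < i" "(x, j) \<in> X" by auto
      then show False using X \<open>b\<close> unfolding partial_perm_def b_def by (metis snd_conv less_irrefl prod.inject)
    qed
    ultimately show "m = l \<and> v = l" using g unfolding growth_invariant_def l_def m_def v_def by auto
  qed
  have "p = fomin_fwd l m v b" unfolding p_def l_def m_def v_def b_def by simp
  then show ?thesis using fomin_fwd_props[of l m v b] g bb unfolding growth_invariant_def l_def m_def v_def by auto
qed

lemma growth_invariant_holds: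
  assumes X: "partial_perm X"
  shows "growth_invariant X i j"
proof (induction "i + j" arbitrary: i j rule: less_induct)
  case less
  have part: "is_partition (growth X i j)"
  proof (cases i)
    case 0 then show ?thesis by simp
  next
    case (Suc i')
    show ?thesis
    proof (cases j)
      case 0 then show ?thesis by simp
    next
      case (Suc j')
      have "growth_invariant X i' j'" using less \<open>i = Suc i'\<close> Suc by auto
      then show ?thesis using growth_cell[OF X, of i' j'] \<open>i = Suc i'\<close> Suc by auto
    qed
  qed
  have col: "cell_step (growth X i j) (growth X (Suc i) j) \<and> (growth X (Suc i) j \<noteq> growth X i j \<longleftrightarrow> (\<exists>y<j. (i, y) \<in> X))"
  proof (cases j)
    case 0 then show ?thesis by simp
  next
    case (Suc j')
    have "growth_invariant X i j'" using less Suc by auto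
    then have "cell_step (growth X i j) (growth X (Suc i) j) \<and> (growth X (Suc i) j \<noteq> growth X i j \<longleftrightarrow>
        (growth X (Suc i) j' \<noteq> growth X i j' \<or> (i, j') \<in> X))"
      using growth_cell[OF X, of i j'] Suc by auto
    also have "(growth X (Suc i) j' \<noteq> growth X i j' \<or> (i, j') \<in> X) \<longleftrightarrow> (\<exists>y<j. (i, y) \<in> X)"
      using \<open>growth_invariant X i j'\<close> Suc unfolding growth_invariant_def by (auto simp: less_Suc_eq)
    finally show ?thesis .
  qed
  have row: "cell_step (growth X i j) (growth X i (Suc j)) \<and> (growth X i (Suc j) \<noteq> growth X i j \<longleftrightarrow> (\<exists>x<i. (x, j) \<in> X))"
  proof (cases i)
    case 0 then show ?thesis by simp
  next
    case (Suc i')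
    have "growth_invariant X i' j" using less Suc by auto
    then have "cell_step (growth X i j) (growth X i (Suc j)) \<and> (growth X i (Suc j) \<noteq> growth X i j \<longleftrightarrow>
        (growth X i' (Suc j) \<noteq> growth X i' j \<or> (i', j) \<in> X))"
      using growth_cell[OF X, of i' j] Suc by auto
    also have "(growth X i' (Suc j) \<noteq> growth X i' j \<or> (i', j) \<in> X) \<longleftrightarrow> (\<exists>x<i. (x, j) \<in> X)"
      using \<open>growth_invariant X i' j\<close> Suc unfolding growth_invariant_def by (auto simp: less_Suc_eq)
    finally show ?thesis .
  qed
  show ?case using part col row unfolding growth_invariant_def by auto
qed

lemma growth_partition: "partial_perm X \<Longrightarrow> is_partition (growth X i j)"
  using growth_invariant_holds unfolding growth_invariant_def by auto

lemma growth_le_Suc_left: "partial_perm X \<Longrightarrow> growth X i j \<le> growth X (Suc i) j"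
  using growth_invariant_holds cell_step_le unfolding growth_invariant_def by blast

lemma growth_le_Suc_right: "partial_perm X \<Longrightarrow> growth X i j \<le> growth X i (Suc j)"
  using growth_invariant_holds cell_step_le unfolding growth_invariant_def by blast

lemma growth_mono:
  assumes X: "partial_perm X" and "i \<le> i'" "j \<le> j'"
  shows "growth X i j \<le> growth X i' j'"
proof -
  have "growth X i j \<le> growth X i' j"
    using \<open>i \<le> i'\<close> by (induction rule: dec_induct) (use growth_le_Suc_left[OF X] order_trans in blast)+
  also have "\<dots> \<le> growth X i' j'"
    using \<open>j \<le> j'\<close> by (induction rule: dec_induct) (use growth_le_Suc_right[OF X] order_trans in blast)+
  finally show ?thesis .
qed

definition rect :: "nat \<Rightarrow> nat \<Rightarrow> (nat \<times> nat) set" where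
  "rect i j = {(a, b). a < i \<and> b < j}"

lemma growth_local:
  assumes "X \<inter> rect i j = Y \<inter> rect i j"
  shows "growth X i j = growth Y i j"
  using assms
proof (induction X i j rule: growth.induct)
  case (3 X i j)
  have sub: "rect i j \<subseteq> rect (Suc i) (Suc j)" "rect (Suc i) j \<subseteq> rect (Suc i) (Suc j)"
    "rect i (Suc j) \<subseteq> rect (Suc i) (Suc j)" "(i, j) \<in> rect (Suc i) (Suc j)"
    unfolding rect_def by auto
  have r1: "X \<inter> rect i j = Y \<inter> rect i j" "X \<inter> rect (Suc i) j = Y \<inter> rect (Suc i) j"
    "X \<inter> rect i (Suc j) = Y \<inter> rect i (Suc j)"
    using "3.prems" sub by blast+
  have "(i, j) \<in> X \<longleftrightarrow> (i, j) \<in> Y" using "3.prems" sub by blast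
  then show ?case using 3 r1 by simp
qed auto

lemma growth_swap: "growth (prod.swap ` X) i j = growth X j i"
proof (induction X i j rule: growth.induct)
  case (1 X j)
  then show ?case by (cases j) auto
next
  case (3 X i j)
  have "(i, j) \<in> prod.swap ` X \<longleftrightarrow> (j, i) \<in> X" by force
  then show ?case using 3 by (simp add: fomin_fwd_sym)
qed auto

section \<open>Conjugate partitions\<close>

definition conjugate :: "(nat \<Rightarrow> nat) \<Rightarrow> nat \<Rightarrow> nat" where
  "conjugate l c = card {r. c < l r}"

lemma is_partition_finite_rows: "is_partition l \<Longrightarrow> finite {r. c < l r}"
proof -
  assume "is_partition l"
  then obtain N where "\<forall>i\<ge>N. l i = 0" unfolding is_partition_def by auto
  then have "{r. c < l r} \<subseteq> {..<N}" by (auto simp: not_less[symmetric])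
  then show ?thesis using finite_subset by blast
qed

lemma finite_down_closed_eq_lessThan:
  assumes fin: "finite S" and dc: "\<And>r r'. r \<in> S \<Longrightarrow> r' \<le> r \<Longrightarrow> r' \<in> S"
  shows "S = {..<card S}"
proof -
  have ex: "\<exists>r. r \<notin> S" using fin by (meson ex_new_if_finite infinite_UNIV_nat)
  define k where "k = (LEAST r. r \<notin> S)"
  have kS: "k \<notin> S" unfolding k_def by (rule LeastI_ex[OF ex])
  have "S = {..<k}"
  proof
    show "S \<subseteq> {..<k}"
    proof
      fix r assume "r \<in> S"
      then show "r \<in> {..<k}" using kS dc by (meson lessThan_iff not_le)
    qed
  next
    show "{..<k} \<subseteq> S" unfolding k_def using not_less_Least by auto
  qed
  then show ?thesis by simp
qed

lemma conjugate_less_iff: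
  assumes "is_partition l"
  shows "r < conjugate l c \<longleftrightarrow> c < l r"
proof -
  have "{r. c < l r} = {..<card {r. c < l r}}"
  proof (rule finite_down_closed_eq_lessThan)
    show "finite {r. c < l r}" using is_partition_finite_rows[OF assms] .
    fix r r' assume "r \<in> {r. c < l r}" "r' \<le> r"
    then show "r' \<in> {r. c < l r}" using is_partition_antimono[OF assms] by (auto intro: less_le_trans)
  qed
  then show ?thesis unfolding conjugate_def by blast
qed

lemma is_partition_conjugate: "is_partition l \<Longrightarrow> is_partition (conjugate l)"
  unfolding is_partition_def[of "conjugate l"]
proof safe
  assume l: "is_partition l"
  fix i
  show "conjugate l (Suc i) \<le> conjugate l i" unfolding conjugate_def
    by (rule card_mono[OF is_partition_finite_rows[OF l]]) auto
next
  assume l: "is_partition l"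
  show "\<exists>N. \<forall>i\<ge>N. conjugate l i = 0"
  proof (intro exI allI impI)
    fix i assume "l 0 \<le> i"
    then have "{r. i < l r} = {}" using is_partition_antimono[OF l, of 0] by (auto simp: not_less) (meson le0 le_trans not_le)
    then show "conjugate l i = 0" unfolding conjugate_def by simp
  qed
qed

lemma conjugate_conjugate: "is_partition l \<Longrightarrow> conjugate (conjugate l) = l"
proof
  fix r assume l: "is_partition l"
  have "{c. r < conjugate l c} = {c. c < l r}" using conjugate_less_iff[OF l] by auto
  then show "conjugate (conjugate l) r = l r" unfolding conjugate_def[of "conjugate l"] by simp
qed

lemma conjugate_inj: "is_partition l \<Longrightarrow> is_partition m \<Longrightarrow> conjugate l = conjugate m \<Longrightarrow> l = m"
  by (metis conjugate_conjugate)

lemma conjugate_empty[simp]: "conjugate empty_shape = empty_shape"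
  unfolding conjugate_def empty_shape_def by (auto simp: fun_eq_iff)

lemma conjugate_add_cell:
  assumes l: "is_partition l" and m: "is_partition (add_cell l r)"
  shows "conjugate (add_cell l r) = add_cell (conjugate l) (l r)"
proof
  fix c
  show "conjugate (add_cell l r) c = add_cell (conjugate l) (l r) c"
  proof (cases "c = l r")
    case True
    have "{r'. c < add_cell l r r'} = insert r {r'. c < l r'}" using True unfolding add_cell_def by auto
    moreover have "r \<notin> {r'. c < l r'}" using True by auto
    ultimately show ?thesis using True is_partition_finite_rows[OF l] unfolding conjugate_def add_cell_def by simp
  next
    case False
    have "{r'. c < add_cell l r r'} = {r'. c < l r'}" using False unfolding add_cell_def by auto
    then show ?thesis using False unfolding conjugate_def add_cell_def by simp
  qed
qed

lemma cell_step_conjugate: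
  assumes l: "is_partition l" and a: "cell_step l m"
  shows "cell_step (conjugate l) (conjugate m)"
proof (cases "m = l")
  case True then show ?thesis by simp
next
  case False
  then obtain r where r: "m = add_cell l r" "is_partition m" using a unfolding cell_step_def by auto
  then have "conjugate m = add_cell (conjugate l) (l r)" using conjugate_add_cell l by auto
  then show ?thesis using is_partition_conjugate[OF r(2)] unfolding cell_step_def by auto
qed

lemma conjugate_mono_0:
  assumes "l \<le> m" "is_partition m"
  shows "conjugate l 0 \<le> conjugate m 0"
proof -
  have "{r. 0 < l r} \<subseteq> {r. 0 < m r}" using assms(1) by (auto simp: le_fun_def intro: less_le_trans)
  then show ?thesis unfolding conjugate_def by (rule card_mono[OF is_partition_finite_rows[OF assms(2)]])
qed

definition in_box :: "nat \<Rightarrow> nat \<Rightarrow> (nat \<Rightarrow> nat) \<Rightarrow> bool" where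
  "in_box d L l \<longleftrightarrow> l 0 < L \<and> conjugate l 0 < d"

lemma in_box_conjugate: "is_partition l \<Longrightarrow> in_box L d (conjugate l) \<longleftrightarrow> in_box d L l"
  unfolding in_box_def using conjugate_conjugate by auto

lemma in_box_mono: "l \<le> m \<Longrightarrow> is_partition m \<Longrightarrow> in_box d L m \<Longrightarrow> in_box d L l"
  unfolding in_box_def using conjugate_mono_0[of l m] by (auto simp: le_fun_def intro: le_less_trans)

section \<open>Growth diagrams on Ferrers boards\<close>

definition down_closed :: "(nat \<times> nat) set \<Rightarrow> bool" where
  "down_closed D \<longleftrightarrow> (\<forall>a b a' b'. (a, b) \<in> D \<longrightarrow> a' \<le> a \<longrightarrow> b' \<le> b \<longrightarrow> (a', b') \<in> D)"

lemma down_closedD: "down_closed D \<Longrightarrow> (a, b) \<in> D \<Longrightarrow> a' \<le> a \<Longrightarrow> b' \<le> b \<Longrightarrow> (a', b') \<in> D"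
  unfolding down_closed_def by blast

text \<open>The lattice points on the north-east boundary of the board, together with those on the
  axes: the points outside \<open>D\<close> whose south-west cell lies in \<open>D\<close>.\<close>

definition border :: "(nat \<times> nat) set \<Rightarrow> (nat \<times> nat) set" where
  "border D = {(x, y). (x, y) \<notin> D \<and> (x = 0 \<or> y = 0 \<or> (x - 1, y - 1) \<in> D)}"

definition valid_labelling :: "(nat \<times> nat) set \<Rightarrow> (nat \<times> nat \<Rightarrow> nat \<Rightarrow> nat) \<Rightarrow> bool" where
  "valid_labelling D v \<longleftrightarrow> (\<forall>c\<in>border D. is_partition (v c)) \<and> (\<forall>c\<in>border D. (fst c = 0 \<or> snd c = 0) \<longrightarrow> v c = empty_shape)
     \<and> (\<forall>x y. (x, y) \<in> border D \<longrightarrow> (Suc x, y) \<in> border D \<longrightarrow> cell_step (v (x, y)) (v (Suc x, y)))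
     \<and> (\<forall>x y. (x, y) \<in> border D \<longrightarrow> (x, Suc y) \<in> border D \<longrightarrow> cell_step (v (x, y)) (v (x, Suc y)))"

definition growth_at :: "(nat \<times> nat) set \<Rightarrow> nat \<times> nat \<Rightarrow> nat \<Rightarrow> nat" where
  "growth_at X c = growth X (fst c) (snd c)"

lemma valid_labelling_growth: "partial_perm X \<Longrightarrow> valid_labelling D (growth_at X)"
  unfolding valid_labelling_def growth_at_def using growth_invariant_holds[of X] growth_partition[of X] unfolding growth_invariant_def
  by (auto simp: growth_at_def)

lemma valid_labelling_conjugate: "valid_labelling D v \<Longrightarrow> valid_labelling D (conjugate \<circ> v)"
  unfolding valid_labelling_def by (auto simp: cell_step_conjugate is_partition_conjugate)

lemma obtain_max_diagonal:
  fixes D :: "(nat \<times> nat) set"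
  assumes "finite D" "D \<noteq> {}"
  obtains a b where "(a, b) \<in> D" "\<And>x y. (x, y) \<in> D \<Longrightarrow> x + y \<le> a + b"
proof -
  define M where "M = Max ((\<lambda>c. fst c + snd c) ` D)"
  have "M \<in> (\<lambda>c. fst c + snd c) ` D" unfolding M_def using assms by auto
  then obtain c where c: "c \<in> D" "fst c + snd c = M" by auto
  have "\<And>x y. (x, y) \<in> D \<Longrightarrow> x + y \<le> M"
  proof -
    fix x y assume "(x, y) \<in> D"
    then have "x + y \<in> (\<lambda>c. fst c + snd c) ` D" by force
    then show "x + y \<le> M" unfolding M_def using assms(1) by simp
  qed
  then show ?thesis using that[of "fst c" "snd c"] c by auto
qed

locale extremal_cell =
  fixes D a b
  assumes ds: "down_closed D" and ab: "(a, b) \<in> D" and mx: "\<And>x y. (x, y) \<in> D \<Longrightarrow> x + y \<le> a + b"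
begin

lemma max_cell_only: "(x, y) \<in> D \<Longrightarrow> a \<le> x \<Longrightarrow> b \<le> y \<Longrightarrow> x = a \<and> y = b"
  using mx[of x y] by auto

lemma Suc_fst_notin: "(Suc a, b) \<notin> D" using mx[of "Suc a" b] by auto

lemma Suc_snd_notin: "(a, Suc b) \<notin> D" using mx[of a "Suc b"] by auto

lemma down_closed_remove: "down_closed (D - {(a, b)})"
  unfolding down_closed_def
proof (intro allI impI)
  fix x y x' y' assume "(x, y) \<in> D - {(a, b)}" "x' \<le> x" "y' \<le> y"
  note h = this
  have "(x', y') \<in> D" using h ds unfolding down_closed_def by blast
  moreover have "(x', y') \<noteq> (a, b)"
  proof
    assume "(x', y') = (a, b)"
    then have "x = a \<and> y = b" using max_cell_only[of x y] h by auto
    then show False using h by auto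
  qed
  ultimately show "(x', y') \<in> D - {(a, b)}" by auto
qed

lemma border_corners: "(Suc a, Suc b) \<in> border D" "(Suc a, b) \<in> border D" "(a, Suc b) \<in> border D" "(a, b) \<notin> border D"
proof -
  have "(Suc a, Suc b) \<notin> D"
  proof
    assume "(Suc a, Suc b) \<in> D"
    then have "(Suc a, b) \<in> D" using ds unfolding down_closed_def by (meson le_Suc_eq order_refl)
    then show False using Suc_fst_notin by simp
  qed
  then show "(Suc a, Suc b) \<in> border D" using ab unfolding border_def by auto
  have "(a, b - 1) \<in> D" using ds ab unfolding down_closed_def by (meson diff_le_self le_refl)
  then show "(Suc a, b) \<in> border D" using Suc_fst_notin unfolding border_def by auto
  have "(a - 1, b) \<in> D" using ds ab unfolding down_closed_def by (meson diff_le_self le_refl)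
  then show "(a, Suc b) \<in> border D" using Suc_snd_notin unfolding border_def by auto
  show "(a, b) \<notin> border D" using ab unfolding border_def by auto
qed

lemma border_remove: "border (D - {(a, b)}) = insert (a, b) (border D - {(Suc a, Suc b)})"
proof (intro set_eqI iffI)
  fix c assume c: "c \<in> border (D - {(a, b)})"
  obtain x y where xy: "c = (x, y)" by (cases c)
  show "c \<in> insert (a, b) (border D - {(Suc a, Suc b)})"
  proof (cases "c = (a, b)")
    case False
    then have "(x, y) \<notin> D" using c xy unfolding border_def by auto
    moreover have "x = 0 \<or> y = 0 \<or> (x - 1, y - 1) \<in> D" using c xy unfolding border_def by auto
    moreover have "c \<noteq> (Suc a, Suc b)" using c xy unfolding border_def by auto
    ultimately show ?thesis using xy unfolding border_def by auto
  qed auto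
next
  fix c assume c: "c \<in> insert (a, b) (border D - {(Suc a, Suc b)})"
  obtain x y where xy: "c = (x, y)" by (cases c)
  show "c \<in> border (D - {(a, b)})"
  proof (cases "c = (a, b)")
    case True
    have "a = 0 \<or> b = 0 \<or> (a - 1, b - 1) \<in> D" using ds ab unfolding down_closed_def
      by (metis diff_le_self)
    moreover have "a = 0 \<or> b = 0 \<or> (a - 1, b - 1) \<noteq> (a, b)" by auto
    ultimately show ?thesis using True unfolding border_def by auto
  next
    case False
    then have b1: "(x, y) \<in> border D" "(x, y) \<noteq> (Suc a, Suc b)" using c xy by auto
    have "x = 0 \<or> y = 0 \<or> (x - 1, y - 1) \<in> D - {(a, b)}"
    proof (cases "x = 0 \<or> y = 0")
      case False
      then have "(x - 1, y - 1) \<in> D" using b1 unfolding border_def by auto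
      moreover have "(x - 1, y - 1) \<noteq> (a, b)" using False b1(2) by auto
      ultimately show ?thesis by auto
    qed auto
    then show ?thesis using xy b1 unfolding border_def by auto
  qed
qed

lemma max_cell_notin_rect: "c \<in> border D \<Longrightarrow> c \<noteq> (Suc a, Suc b) \<Longrightarrow> (a, b) \<notin> rect (fst c) (snd c)"
proof
  assume c: "c \<in> border D" "c \<noteq> (Suc a, Suc b)" "(a, b) \<in> rect (fst c) (snd c)"
  obtain x y where xy: "c = (x, y)" by (cases c)
  then have "a < x" "b < y" using c(3) unfolding rect_def by auto
  then have "(x - 1, y - 1) \<in> D" using c(1) xy unfolding border_def by auto
  then have "x - 1 = a" "y - 1 = b" using max_cell_only \<open>a < x\<close> \<open>b < y\<close> by auto
  then show False using c(2) xy \<open>a < x\<close> \<open>b < y\<close> by auto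
qed

lemma cell_left_below_in_board:
  assumes "(x, y) \<in> border (D - {(a, b)})" "(x, y) \<noteq> (a, b)"
  shows "(Suc x, y) \<noteq> (a, b)" "(x, Suc y) \<noteq> (a, b)"
proof -
  have "(x, y) \<notin> D" using assms unfolding border_def by auto
  then show "(Suc x, y) \<noteq> (a, b)" "(x, Suc y) \<noteq> (a, b)"
    using ds ab unfolding down_closed_def by (metis Pair_inject le_refl lessI less_imp_le_nat)+
qed

lemma valid_labelling_remove:
  assumes v: "valid_labelling D v" and l: "is_partition l"
    and lm: "cell_step l (v (Suc a, b))" and lv: "cell_step l (v (a, Suc b))"
  shows "valid_labelling (D - {(a, b)}) (v((a, b) := l))"
proof -
  let ?D = "D - {(a, b)}" and ?v = "v((a, b) := l)"
  have vP: "\<And>c. c \<in> border D \<Longrightarrow> is_partition (v c)"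
    and v0: "\<And>c. c \<in> border D \<Longrightarrow> fst c = 0 \<or> snd c = 0 \<Longrightarrow> v c = empty_shape"
    and vH: "\<And>x y. (x, y) \<in> border D \<Longrightarrow> (Suc x, y) \<in> border D \<Longrightarrow> cell_step (v (x, y)) (v (Suc x, y))"
    and vV: "\<And>x y. (x, y) \<in> border D \<Longrightarrow> (x, Suc y) \<in> border D \<Longrightarrow> cell_step (v (x, y)) (v (x, Suc y))"
    using v unfolding valid_labelling_def by auto
  have v': "c \<in> border D" "?v c = v c" if "c \<in> border ?D" "c \<noteq> (a, b)" for c
    using that border_remove by auto
  have l0: "l = empty_shape" if "a = 0 \<or> b = 0"
  proof -
    have "v (Suc a, b) = empty_shape \<or> v (a, Suc b) = empty_shape"
      using v0 border_corners that by auto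
    then show ?thesis using cell_step_le[OF lm] cell_step_le[OF lv]
      by (auto simp: le_fun_def empty_shape_def fun_eq_iff)
  qed
  show ?thesis unfolding valid_labelling_def
  proof (intro conjI ballI allI impI)
    fix c assume c: "c \<in> border ?D"
    show "is_partition (?v c)" using v'[OF c] vP l by (cases "c = (a, b)") auto
    assume "fst c = 0 \<or> snd c = 0"
    then show "?v c = empty_shape" using v'[OF c] v0 l0 by (cases "c = (a, b)") auto
  next
    fix x y assume xy: "(x, y) \<in> border ?D"
    {
      assume Sx: "(Suc x, y) \<in> border ?D"
      show "cell_step (?v (x, y)) (?v (Suc x, y))"
      proof (cases "(x, y) = (a, b)")
        case False
        then show ?thesis using v'[OF xy False] v'[OF Sx] vH cell_left_below_in_board[OF xy False] by auto
      qed (use lm in auto)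
    next
      assume Sy: "(x, Suc y) \<in> border ?D"
      show "cell_step (?v (x, y)) (?v (x, Suc y))"
      proof (cases "(x, y) = (a, b)")
        case False
        then show ?thesis using v'[OF xy False] v'[OF Sy] vV cell_left_below_in_board[OF xy False] by auto
      qed (use lv in auto)
    }
  qed
qed

lemma partial_perm_insert_max_cell:
  assumes X: "X \<subseteq> D - {(a, b)}" "partial_perm X"
    and col: "\<not> (\<exists>y<b. (a, y) \<in> X)" and row: "\<not> (\<exists>x<a. (x, b) \<in> X)"
  shows "partial_perm (insert (a, b) X)"
proof -
  have sep: "x \<noteq> a \<and> y \<noteq> b" if "(x, y) \<in> X" for x y
  proof -
    have xy: "(x, y) \<in> D" "(x, y) \<noteq> (a, b)" using that X(1) by auto
    have dc: "(x', y') \<in> D" if "x' \<le> x" "y' \<le> y" for x' y'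
      using ds xy(1) that unfolding down_closed_def by blast
    have yb: "y \<le> b" if "x = a"
    proof (rule ccontr)
      assume "\<not> y \<le> b"
      then show False using dc[of a "Suc b"] that Suc_snd_notin by simp
    qed
    have xa: "x \<le> a" if "y = b"
    proof (rule ccontr)
      assume "\<not> x \<le> a"
      then show False using dc[of "Suc a" b] that Suc_fst_notin by simp
    qed
    have "x \<noteq> a"
    proof
      assume "x = a"
      then have "y < b" using yb xy(2) by (simp add: le_less)
      then show False using col that \<open>x = a\<close> by auto
    qed
    moreover have "y \<noteq> b"
    proof
      assume "y = b"
      then have "x < a" using xa xy(2) by (simp add: le_less)
      then show False using row that \<open>y = b\<close> by auto
    qed
    ultimately show ?thesis ..
  qed
  have sep': "fst r \<noteq> a \<and> snd r \<noteq> b" if "r \<in> X" for r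
    using sep[of "fst r" "snd r"] that by simp
  show ?thesis unfolding partial_perm_def
  proof (intro ballI impI)
    fix p q assume pq: "p \<in> insert (a, b) X" "q \<in> insert (a, b) X" "fst p = fst q \<or> snd p = snd q"
    consider "p = (a, b)" "q = (a, b)" | "p = (a, b)" "q \<in> X" | "p \<in> X" "q = (a, b)" | "p \<in> X" "q \<in> X"
      using pq(1,2) by blast
    then show "p = q"
    proof cases
      case 2 then show ?thesis using sep'[OF 2(2)] pq(3) by auto
    next
      case 3 then show ?thesis using sep'[OF 3(1)] pq(3) by auto
    next
      case 4 then show ?thesis using X(2) pq(3) unfolding partial_perm_def by blast
    qed simp
  qed
qed

end

lemma growth_insert_outside: "p \<notin> rect i j \<Longrightarrow> growth (insert p X) i j = growth X i j"
  by (rule growth_local) auto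

lemma growth_remove_outside: "p \<notin> rect i j \<Longrightarrow> growth (X - {p}) i j = growth X i j"
  by (rule growth_local) auto

text \<open>Every valid labelling of the border of a finite Ferrers board comes from a filling: remove a
  corner cell, recover its south-west label and its content by the backward rule, and recurse.\<close>

lemma filling_exists:
  assumes "finite D" "down_closed D" "valid_labelling D v"
  shows "\<exists>X\<subseteq>D. partial_perm X \<and> (\<forall>c\<in>border D. growth_at X c = v c)"
  using assms
proof (induction "card D" arbitrary: D v rule: less_induct)
  case less
  show ?case
  proof (cases "D = {}")
    case True
    have "growth_at {} c = v c" if "c \<in> border D" for c
    proof -
      have "fst c = 0 \<or> snd c = 0" using True that unfolding border_def by auto
      then show ?thesis using less.prems(3) that unfolding valid_labelling_def growth_at_def
        by (metis growth.simps(1) growth_0_right)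
    qed
    then show ?thesis by (intro exI[of _ "{}"]) (simp add: partial_perm_def)
  next
    case False
    obtain a b where ab: "(a, b) \<in> D" "\<And>x y. (x, y) \<in> D \<Longrightarrow> x + y \<le> a + b"
      using obtain_max_diagonal[OF less.prems(1) False] by blast
    interpret extremal_cell D a b using ab less.prems(2) by unfold_locales auto
    define m nu p where "m = v (Suc a, b)" and "nu = v (a, Suc b)" and "p = v (Suc a, Suc b)"
    obtain l bb where lb: "fomin_bwd m nu p = (l, bb)" by fastforce
    have "is_partition m" "is_partition nu" "is_partition p" "cell_step m p" "cell_step nu p"
      using less.prems(3) border_corners unfolding valid_labelling_def m_def nu_def p_def by auto
    then have rp: "is_partition l" "cell_step l m" "cell_step l nu" "bb \<longrightarrow> m = l \<and> nu = l"
      "fomin_fwd l m nu bb = p"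
      using fomin_bwd_props lb by blast+
    have val: "valid_labelling (D - {(a, b)}) (v((a, b) := l))"
      using valid_labelling_remove[OF less.prems(3) rp(1)] rp(2,3) unfolding m_def nu_def by blast
    have card: "card (D - {(a, b)}) < card D" using ab less.prems(1) by (meson card_Diff1_less)
    have "\<exists>X'\<subseteq>D - {(a, b)}. partial_perm X'
        \<and> (\<forall>c\<in>border (D - {(a, b)}). growth_at X' c = (v((a, b) := l)) c)"
      using less.prems(1) by (intro less.hyps[OF card _ down_closed_remove val]) simp
    then obtain X' where X': "X' \<subseteq> D - {(a, b)}" "partial_perm X'"
      "\<forall>c\<in>border (D - {(a, b)}). growth_at X' c = (v((a, b) := l)) c"
      by blast
    have corners': "(a, b) \<in> border (D - {(a, b)})" "(Suc a, b) \<in> border (D - {(a, b)})"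
      "(a, Suc b) \<in> border (D - {(a, b)})"
      using border_remove border_corners by auto
    have g: "growth X' a b = l" "growth X' (Suc a) b = m" "growth X' a (Suc b) = nu"
      using X'(3) corners' unfolding growth_at_def m_def nu_def by auto
    define X where "X = (if bb then insert (a, b) X' else X')"
    have "partial_perm X"
    proof (cases bb)
      case True
      have "growth_invariant X' a b" by (rule growth_invariant_holds[OF X'(2)])
      then have "\<not> (\<exists>y<b. (a, y) \<in> X')" "\<not> (\<exists>x<a. (x, b) \<in> X')"
        using g rp(4) True unfolding growth_invariant_def by simp_all
      then show ?thesis using partial_perm_insert_max_cell[OF X'(1,2)] True unfolding X_def by simp
    qed (use X' X_def in auto)
    moreover have outside: "growth X i j = growth X' i j" if "(a, b) \<notin> rect i j" for i j
      using that growth_insert_outside unfolding X_def by auto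
    have "growth_at X c = v c" if c: "c \<in> border D" for c
    proof (cases "c = (Suc a, Suc b)")
      case True
      have "growth X a b = l" "growth X (Suc a) b = m" "growth X a (Suc b) = nu" "(a, b) \<in> X \<longleftrightarrow> bb"
        using outside[of a b] outside[of "Suc a" b] outside[of a "Suc b"] g X'(1)
        unfolding rect_def X_def by auto
      then show ?thesis using rp(5) True unfolding growth_at_def p_def by simp
    next
      case False
      then have "growth_at X c = growth_at X' c" using outside max_cell_notin_rect[OF c] unfolding growth_at_def by auto
      also have "\<dots> = v c" using X'(3) c False border_remove border_corners(4) by auto
      finally show ?thesis .
    qed
    moreover have "X \<subseteq> D" using X'(1) ab unfolding X_def by auto
    ultimately show ?thesis by auto
  qed
qed

lemma filling_unique:
  assumes "finite D" "down_closed D" "X \<subseteq> D" "Y \<subseteq> D" "partial_perm X" "partial_perm Y" "\<forall>c\<in>border D. growth_at X c = growth_at Y c"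
  shows "X = Y"
  using assms
proof (induction "card D" arbitrary: D X Y rule: less_induct)
  case less
  show ?case
  proof (cases "D = {}")
    case True then show ?thesis using less.prems by auto
  next
    case False
    obtain a b where ab: "(a, b) \<in> D" "\<And>x y. (x, y) \<in> D \<Longrightarrow> x + y \<le> a + b"
      using obtain_max_diagonal[OF less.prems(1) False] by blast
    interpret extremal_cell D a b using ab less.prems(2) by unfold_locales auto
    have cX: "fomin_bwd (growth X (Suc a) b) (growth X a (Suc b)) (growth X (Suc a) (Suc b)) = (growth X a b, (a, b) \<in> X)"
      using growth_cell[OF less.prems(5) growth_invariant_holds[OF less.prems(5)]] by auto
    have cY: "fomin_bwd (growth Y (Suc a) b) (growth Y a (Suc b)) (growth Y (Suc a) (Suc b)) = (growth Y a b, (a, b) \<in> Y)"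
      using growth_cell[OF less.prems(6) growth_invariant_holds[OF less.prems(6)]] by auto
    have eq: "growth X (Suc a) b = growth Y (Suc a) b" "growth X a (Suc b) = growth Y a (Suc b)"
      "growth X (Suc a) (Suc b) = growth Y (Suc a) (Suc b)"
      using less.prems(7) border_corners unfolding growth_at_def by force+
    have "(growth X a b, (a, b) \<in> X) = (growth Y a b, (a, b) \<in> Y)"
      by (rule trans[OF cX[unfolded eq, symmetric] cY])
    then have e1: "growth X a b = growth Y a b" and e2: "(a, b) \<in> X \<longleftrightarrow> (a, b) \<in> Y"
      by simp_all
    have cd: "card (D - {(a, b)}) < card D" using ab less.prems(1) by (meson card_Diff1_less)
    have "\<forall>c\<in>border (D - {(a, b)}). growth_at (X - {(a, b)}) c = growth_at (Y - {(a, b)}) c"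
    proof
      fix c assume c: "c \<in> border (D - {(a, b)})"
      show "growth_at (X - {(a, b)}) c = growth_at (Y - {(a, b)}) c"
      proof (cases "c = (a, b)")
        case True
        then show ?thesis using e1 growth_remove_outside[of "(a, b)" a b] unfolding growth_at_def rect_def by auto
      next
        case False
        then have c': "c \<in> border D" "c \<noteq> (Suc a, Suc b)" using c border_remove by auto
        have "growth (X - {(a, b)}) (fst c) (snd c) = growth X (fst c) (snd c)"
          "growth (Y - {(a, b)}) (fst c) (snd c) = growth Y (fst c) (snd c)"
          using max_cell_notin_rect[OF c'] growth_remove_outside by auto
        then show ?thesis using less.prems(7) c'(1) unfolding growth_at_def by auto
      qed
    qed
    then have "X - {(a, b)} = Y - {(a, b)}"
      using less.hyps[OF cd _ down_closed_remove, of "X - {(a, b)}" "Y - {(a, b)}"] less.prems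
      unfolding partial_perm_def by auto
    then show ?thesis using e2 by blast
  qed
qed

definition col_height :: "(nat \<times> nat) set \<Rightarrow> nat \<Rightarrow> nat" where
  "col_height D k = (LEAST y. (k, y) \<notin> D)"

definition row_length :: "(nat \<times> nat) set \<Rightarrow> nat \<Rightarrow> nat" where
  "row_length D y = (LEAST x. (x, y) \<notin> D)"

lemma col_height_border:
  assumes fD: "finite D" and dD: "down_closed D"
  shows "(k, col_height D k) \<in> border D" "(Suc k, col_height D k) \<in> border D" "\<And>y. (k, y) \<in> D \<longleftrightarrow> y < col_height D k"
proof -
  have "finite {y. (k, y) \<in> D}" using fD by (rule finite_subset[rotated, OF finite_imageI[of D snd]]) force
  then obtain y0 where "y0 \<notin> {y. (k, y) \<in> D}" using ex_new_if_finite infinite_UNIV_nat by blast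
  then have ex: "\<exists>y. (k, y) \<notin> D" by auto
  have hn: "(k, col_height D k) \<notin> D" unfolding col_height_def by (rule LeastI_ex[OF ex])
  show ch: "\<And>y. (k, y) \<in> D \<longleftrightarrow> y < col_height D k"
  proof
    fix y assume "(k, y) \<in> D"
    show "y < col_height D k"
    proof (rule ccontr)
      assume "\<not> y < col_height D k"
      then have "(k, col_height D k) \<in> D" using dD \<open>(k, y) \<in> D\<close> unfolding down_closed_def by (meson le_refl not_less)
      then show False using hn by simp
    qed
  next
    fix y assume "y < col_height D k"
    then show "(k, y) \<in> D" unfolding col_height_def using not_less_Least by blast
  qed
  have a: "col_height D k = 0 \<or> (k, col_height D k - 1) \<in> D"
  proof (cases "col_height D k = 0")
    case False
    then have "col_height D k - 1 < col_height D k" by simp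
    then show ?thesis using ch by blast
  qed simp
  show "(k, col_height D k) \<in> border D"
  proof -
    have "k = 0 \<or> col_height D k = 0 \<or> (k - 1, col_height D k - 1) \<in> D"
      using a dD unfolding down_closed_def by (meson diff_le_self le_refl)
    then show ?thesis using hn unfolding border_def by auto
  qed
  show "(Suc k, col_height D k) \<in> border D"
  proof -
    have "(Suc k, col_height D k) \<notin> D" using hn dD unfolding down_closed_def by (meson le_refl le_Suc_eq)
    then show ?thesis using a unfolding border_def by auto
  qed
qed

lemma row_length_border:
  assumes fD: "finite D" and dD: "down_closed D"
  shows "(row_length D y, y) \<in> border D" "(row_length D y, Suc y) \<in> border D" "\<And>x. (x, y) \<in> D \<longleftrightarrow> x < row_length D y"
proof -
  have "finite {x. (x, y) \<in> D}" using fD by (rule finite_subset[rotated, OF finite_imageI[of D fst]]) force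
  then obtain x0 where "x0 \<notin> {x. (x, y) \<in> D}" using ex_new_if_finite infinite_UNIV_nat by blast
  then have ex: "\<exists>x. (x, y) \<notin> D" by auto
  have hn: "(row_length D y, y) \<notin> D" unfolding row_length_def by (rule LeastI_ex[OF ex])
  show ch: "\<And>x. (x, y) \<in> D \<longleftrightarrow> x < row_length D y"
  proof
    fix x assume "(x, y) \<in> D"
    show "x < row_length D y"
    proof (rule ccontr)
      assume "\<not> x < row_length D y"
      then have "(row_length D y, y) \<in> D" using dD \<open>(x, y) \<in> D\<close> unfolding down_closed_def by (meson le_refl not_less)
      then show False using hn by simp
    qed
  next
    fix x assume "x < row_length D y"
    then show "(x, y) \<in> D" unfolding row_length_def using not_less_Least by blast
  qed
  have a: "row_length D y = 0 \<or> (row_length D y - 1, y) \<in> D"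
  proof (cases "row_length D y = 0")
    case False
    then have "row_length D y - 1 < row_length D y" by simp
    then show ?thesis using ch by blast
  qed simp
  show "(row_length D y, y) \<in> border D"
  proof -
    have "row_length D y = 0 \<or> y = 0 \<or> (row_length D y - 1, y - 1) \<in> D"
      using a dD unfolding down_closed_def by (meson diff_le_self le_refl)
    then show ?thesis using hn unfolding border_def by auto
  qed
  show "(row_length D y, Suc y) \<in> border D"
  proof -
    have "(row_length D y, Suc y) \<notin> D" using hn dD unfolding down_closed_def by (meson le_refl le_Suc_eq)
    then show ?thesis using a unfolding border_def by auto
  qed
qed

lemma col_occupied_iff:
  assumes "finite D" "down_closed D" "partial_perm Y" "Y \<subseteq> D"
  shows "(\<exists>y. (k, y) \<in> Y) \<longleftrightarrow> growth_at Y (Suc k, col_height D k) \<noteq> growth_at Y (k, col_height D k)"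
proof -
  have "growth_at Y (Suc k, col_height D k) \<noteq> growth_at Y (k, col_height D k) \<longleftrightarrow> (\<exists>y<col_height D k. (k, y) \<in> Y)"
    using growth_invariant_holds[OF assms(3), of k "col_height D k"] unfolding growth_invariant_def growth_at_def by simp
  moreover have "\<And>y. (k, y) \<in> Y \<Longrightarrow> y < col_height D k" using col_height_border(3)[OF assms(1,2)] assms(4) by blast
  ultimately show ?thesis by blast
qed

lemma row_occupied_iff:
  assumes "finite D" "down_closed D" "partial_perm Y" "Y \<subseteq> D"
  shows "(\<exists>x. (x, y) \<in> Y) \<longleftrightarrow> growth_at Y (row_length D y, Suc y) \<noteq> growth_at Y (row_length D y, y)"
proof -
  have "growth_at Y (row_length D y, Suc y) \<noteq> growth_at Y (row_length D y, y) \<longleftrightarrow> (\<exists>x<row_length D y. (x, y) \<in> Y)"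
    using growth_invariant_holds[OF assms(3), of "row_length D y" y] unfolding growth_invariant_def growth_at_def by simp
  moreover have "\<And>x. (x, y) \<in> Y \<Longrightarrow> x < row_length D y" using row_length_border(3)[OF assms(1,2)] assms(4) by blast
  ultimately show ?thesis by blast
qed


lemma conjugate_filling_same_lines:
  assumes D: "finite D" "down_closed D" and X: "X \<subseteq> D" "partial_perm X"
    and Y: "Y \<subseteq> D" "partial_perm Y"
    and XY: "\<forall>c\<in>border D. growth_at Y c = conjugate (growth_at X c)"
  shows "(\<exists>y. (k, y) \<in> Y) \<longleftrightarrow> (\<exists>y. (k, y) \<in> X)" "(\<exists>x. (x, y) \<in> Y) \<longleftrightarrow> (\<exists>x. (x, y) \<in> X)"
proof -
  have "growth_at Y c1 \<noteq> growth_at Y c2 \<longleftrightarrow> growth_at X c1 \<noteq> growth_at X c2"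
    if "c1 \<in> border D" "c2 \<in> border D" for c1 c2
    using XY that conjugate_inj growth_partition[OF X(2)] unfolding growth_at_def by metis
  then show "(\<exists>y. (k, y) \<in> Y) \<longleftrightarrow> (\<exists>y. (k, y) \<in> X)" "(\<exists>x. (x, y) \<in> Y) \<longleftrightarrow> (\<exists>x. (x, y) \<in> X)"
    using col_occupied_iff[OF D Y(2,1)] col_occupied_iff[OF D X(2,1)] col_height_border[OF D]
      row_occupied_iff[OF D Y(2,1)] row_occupied_iff[OF D X(2,1)] row_length_border[OF D]
    by metis+
qed

section \<open>Row insertion (RSK)\<close>

fun row_insert :: "nat \<Rightarrow> nat list \<Rightarrow> nat option \<times> nat list" where
  "row_insert x [] = (None, [x])"
| "row_insert x (y # ys) = (if x < y then (Some y, x # ys) else (case row_insert x ys of (b, ys') \<Rightarrow> (b, y # ys')))"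

fun rsk_insert :: "nat \<Rightarrow> nat list list \<Rightarrow> nat list list" where
  "rsk_insert x [] = [[x]]"
| "rsk_insert x (R # Rs) = (case row_insert x R of (None, R') \<Rightarrow> R' # Rs | (Some y, R') \<Rightarrow> R' # rsk_insert y Rs)"

fun new_row :: "nat \<Rightarrow> nat list list \<Rightarrow> nat" where
  "new_row x [] = 0"
| "new_row x (R # Rs) = (case row_insert x R of (None, _) \<Rightarrow> 0 | (Some y, _) \<Rightarrow> Suc (new_row y Rs))"

definition shape :: "nat list list \<Rightarrow> nat \<Rightarrow> nat" where
  "shape T r = (if r < length T then length (T ! r) else 0)"

definition rsk :: "nat list \<Rightarrow> nat list list" where
  "rsk w = foldl (\<lambda>T x. rsk_insert x T) [] w"

lemma rsk_Nil[simp]: "rsk [] = []" unfolding rsk_def by simp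

lemma rsk_snoc[simp]: "rsk (w @ [x]) = rsk_insert x (rsk w)" unfolding rsk_def by simp

definition entries :: "nat list list \<Rightarrow> nat set" where
  "entries T = set (concat T)"

text \<open>Columns are not required to increase: only these invariants of insertion tableaux are needed.\<close>

definition tableau :: "nat list list \<Rightarrow> bool" where
  "tableau T \<longleftrightarrow> (\<forall>R\<in>set T. R \<noteq> [] \<and> sorted_wrt (<) R) \<and> sorted_wrt (\<lambda>R S. hd R < hd S) T
     \<and> distinct (concat T)"

lemma row_insert_append: "\<forall>z\<in>set R. \<not> x < z \<Longrightarrow> row_insert x R = (None, R @ [x])"
  by (induction R) auto

lemma row_insert_bump:
  "\<forall>a\<in>set A. \<not> x < a \<Longrightarrow> x < y \<Longrightarrow> row_insert x (A @ y # B) = (Some y, A @ x # B)"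
  by (induction A) auto

lemma row_insert_cases:
  obtains (none) "row_insert x R = (None, R @ [x])" "\<forall>z\<in>set R. \<not> x < z"
  | (some) A y B where "R = A @ y # B" "row_insert x R = (Some y, A @ x # B)" "\<forall>a\<in>set A. \<not> x < a" "x < y"
proof (cases "\<forall>z\<in>set R. \<not> x < z")
  case True
  then show ?thesis using none row_insert_append by auto
next
  case False
  then have "\<exists>z\<in>set R. x < z" by auto
  then obtain A y B where "R = A @ y # B" "x < y" "\<forall>a\<in>set A. \<not> x < a"
    using split_list_first_prop[of R "\<lambda>z. x < z"] by auto
  then show ?thesis using some row_insert_bump by auto
qed

lemma shape_Cons: "shape (R # Rs) = (\<lambda>r. case r of 0 \<Rightarrow> length R | Suc r' \<Rightarrow> shape Rs r')"
  unfolding shape_def by (auto simp: fun_eq_iff split: nat.splits)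

lemma shape_Nil: "shape [] = empty_shape"
  unfolding shape_def empty_shape_def by auto

lemma shape_rsk_insert: "shape (rsk_insert x T) = add_cell (shape T) (new_row x T)"
proof (induction T arbitrary: x)
  case Nil
  then show ?case unfolding shape_def add_cell_def by (auto simp: fun_eq_iff)
next
  case (Cons R Rs)
  show ?case
  proof (cases rule: row_insert_cases[of x R])
    case none
    then show ?thesis by (auto simp: shape_Cons add_cell_def fun_eq_iff split: nat.splits)
  next
    case (some A y B)
    then show ?thesis using Cons[of y] by (auto simp: shape_Cons add_cell_def fun_eq_iff split: nat.splits)
  qed
qed

lemma entries_Cons: "entries (R # Rs) = set R \<union> entries Rs" unfolding entries_def by auto

lemma entries_rsk_insert: "entries (rsk_insert x T) = insert x (entries T)"
proof (induction T arbitrary: x)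
  case Nil then show ?case unfolding entries_def by auto
next
  case (Cons R Rs)
  show ?case
  proof (cases rule: row_insert_cases[of x R])
    case none then show ?thesis by (auto simp: entries_Cons)
  next
    case (some A y B) then show ?thesis using Cons[of y] by (auto simp: entries_Cons)
  qed
qed

lemma sorted_row_bump:
  fixes x :: nat
  assumes "sorted_wrt (<) (A @ y # B)" "\<forall>a\<in>set A. \<not> x < a" "x < y" "x \<notin> set A"
  shows "sorted_wrt (<) (A @ x # B)"
proof -
  have "\<forall>a\<in>set A. a < x"
  proof
    fix a assume "a \<in> set A"
    then have "\<not> x < a" "a \<noteq> x" using assms(2,4) by auto
    then show "a < x" by simp
  qed
  moreover have "\<forall>b\<in>set B. x < b" using assms(1,3) by (auto simp: sorted_wrt_append)
  ultimately show ?thesis using assms(1) by (auto simp: sorted_wrt_append)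
qed

lemma tableau_Cons: "tableau (R # Rs) \<longleftrightarrow> R \<noteq> [] \<and> sorted_wrt (<) R \<and> tableau Rs \<and> (\<forall>S\<in>set Rs. hd R < hd S)
   \<and> set R \<inter> entries Rs = {} \<and> distinct R"
  unfolding tableau_def entries_def by auto

lemma tableau_Nil[simp]: "tableau []" unfolding tableau_def by auto

lemma hd_le_sorted: "sorted_wrt (<) S \<Longrightarrow> z \<in> set S \<Longrightarrow> hd S \<le> (z::nat)"
  by (cases S) auto

lemma tableau_hd_less_entries:
  assumes "tableau (R # Rs)" "z \<in> entries Rs"
  shows "hd R < z"
proof -
  obtain S where S: "S \<in> set Rs" "z \<in> set S" using assms(2) unfolding entries_def by auto
  have "sorted_wrt (<) S" using assms(1) S(1) unfolding tableau_Cons tableau_def by auto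
  then have hz: "hd S \<le> z" using hd_le_sorted S(2) by auto
  have "hd R < hd S" using assms(1) S(1) unfolding tableau_Cons by auto
  with hz
  show ?thesis by auto
qed

lemma tableau_rsk_insert:
  assumes "tableau T" "x \<notin> entries T"
  shows "tableau (rsk_insert x T)"
  using assms
proof (induction T arbitrary: x)
  case Nil
  then show ?case unfolding tableau_def by auto
next
  case (Cons R Rs)
  have R: "R \<noteq> []" "sorted_wrt (<) R" "tableau Rs" "\<forall>S\<in>set Rs. hd R < hd S" "set R \<inter> entries Rs = {}" "distinct R"
    using Cons.prems(1) unfolding tableau_Cons by auto
  have xR: "x \<notin> set R" "x \<notin> entries Rs" using Cons.prems(2) by (auto simp: entries_Cons)
  show ?case
  proof (cases rule: row_insert_cases[of x R])
    case none
    have "sorted_wrt (<) (R @ [x])" using R(2) none(2) xR(1) by (auto simp: sorted_wrt_append not_less le_less)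
    moreover have "hd (R @ [x]) = hd R" using R(1) by auto
    moreover have "rsk_insert x (R # Rs) = (R @ [x]) # Rs" using none by simp
    ultimately show ?thesis using none R xR by (auto simp: distinct_append tableau_Cons)
  next
    case (some A y B)
    have yR: "y \<in> set R" "y \<notin> entries Rs" using some(1) R(5) by auto
    have IH: "tableau (rsk_insert y Rs)" using Cons.IH[OF R(3) yR(2)] .
    have s1: "sorted_wrt (<) (A @ x # B)" using sorted_row_bump[of A y B x] R(2) some xR(1) by auto
    have hdle: "hd (A @ x # B) \<le> hd R \<and> hd (A @ x # B) < y"
    proof (cases A)
      case Nil then show ?thesis using some by auto
    next
      case (Cons a A')
      have "a < y" using R(2) some(1) Cons by auto
      then show ?thesis using some(1) Cons by auto
    qed
    have gt: "\<forall>z\<in>entries (rsk_insert y Rs). hd (A @ x # B) < z"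
    proof
      fix z assume "z \<in> entries (rsk_insert y Rs)"
      then have "z = y \<or> z \<in> entries Rs" using entries_rsk_insert by auto
      then show "hd (A @ x # B) < z"
        using hdle tableau_hd_less_entries[OF Cons.prems(1)] by (meson le_less_trans)
    qed
    have hds: "\<forall>S\<in>set (rsk_insert y Rs). hd (A @ x # B) < hd S"
    proof
      fix S assume S: "S \<in> set (rsk_insert y Rs)"
      then have "S \<noteq> []" using IH unfolding tableau_def by auto
      then have "hd S \<in> set S" by simp
      then have "hd S \<in> entries (rsk_insert y Rs)" using S unfolding entries_def by auto
      then show "hd (A @ x # B) < hd S" using gt by auto
    qed
    have disj: "set (A @ x # B) \<inter> entries (rsk_insert y Rs) = {}"
    proof -
      have "set (A @ x # B) = insert x (set R - {y})" using some(1) R(6) by auto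
      moreover have "entries (rsk_insert y Rs) = insert y (entries Rs)" by (rule entries_rsk_insert)
      ultimately show ?thesis using R(5) xR yR(1) by auto
    qed
    have "distinct (A @ x # B)" using s1 by (simp add: strict_sorted_iff)
    moreover have "rsk_insert x (R # Rs) = (A @ x # B) # rsk_insert y Rs" using some by simp
    ultimately show ?thesis using some s1 IH hds disj by (auto simp: tableau_Cons)
  qed
qed

lemma tableau_rsk: "distinct w \<Longrightarrow> tableau (rsk w) \<and> entries (rsk w) = set w"
proof (induction w rule: rev_induct)
  case Nil then show ?case unfolding entries_def by simp
next
  case (snoc x w)
  then show ?case using tableau_rsk_insert entries_rsk_insert by auto
qed

definition restrict_below :: "nat \<Rightarrow> nat list list \<Rightarrow> nat list list" where
  "restrict_below t T = filter (\<lambda>R. R \<noteq> []) (map (filter (\<lambda>y. y < t)) T)"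

lemma restrict_below_Nil[simp]: "restrict_below t [] = []" unfolding restrict_below_def by simp

lemma restrict_below_Cons: "restrict_below t (R # Rs) =
   (if filter (\<lambda>y. y < t) R = [] then restrict_below t Rs else filter (\<lambda>y. y < t) R # restrict_below t Rs)"
  unfolding restrict_below_def by simp

lemma restrict_below_empty: "\<forall>z\<in>entries T. t \<le> z \<Longrightarrow> restrict_below t T = []"
proof (induction T)
  case Nil then show ?case by simp
next
  case (Cons R Rs)
  have "\<forall>z\<in>set R. \<not> z < t"
  proof
    fix z assume "z \<in> set R"
    then have "t \<le> z" using Cons.prems by (auto simp: entries_Cons)
    then show "\<not> z < t" by simp
  qed
  then have "filter (\<lambda>y. y < t) R = []" by (simp add: filter_empty_conv)
  moreover have "restrict_below t Rs = []" using Cons by (auto simp: entries_Cons)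
  ultimately show ?case by (simp add: restrict_below_Cons)
qed

lemma restrict_below_insert_ge:
  assumes "tableau T" "x \<notin> entries T" "t \<le> x"
  shows "restrict_below t (rsk_insert x T) = restrict_below t T"
  using assms
proof (induction T arbitrary: x)
  case Nil
  then show ?case by (simp add: restrict_below_Cons)
next
  case (Cons R Rs)
  have R: "tableau Rs" "set R \<inter> entries Rs = {}" using Cons.prems(1) unfolding tableau_Cons by auto
  show ?case
  proof (cases rule: row_insert_cases[of x R])
    case none
    then show ?thesis using Cons.prems by (auto simp: restrict_below_Cons)
  next
    case (some A y B)
    have yR: "y \<notin> entries Rs" using R(2) some(1) by auto
    have "restrict_below t (rsk_insert y Rs) = restrict_below t Rs" using Cons.IH[OF R(1) yR] some Cons.prems(3) by auto
    moreover have "filter (\<lambda>z. z < t) (A @ x # B) = filter (\<lambda>z. z < t) R" using some(1) some(4) Cons.prems(3) by auto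
    ultimately show ?thesis using some by (auto simp: restrict_below_Cons)
  qed
qed

lemma restrict_below_insert_less:
  assumes "tableau T" "x \<notin> entries T" "x < t"
  shows "restrict_below t (rsk_insert x T) = rsk_insert x (restrict_below t T)"
  using assms
proof (induction T arbitrary: x)
  case Nil
  then show ?case by (simp add: restrict_below_Cons)
next
  case (Cons R Rs)
  have R: "R \<noteq> []" "sorted_wrt (<) R" "tableau Rs" "set R \<inter> entries Rs = {}"
    using Cons.prems(1) unfolding tableau_Cons by auto
  have xR: "x \<notin> set R" "x \<notin> entries Rs" using Cons.prems(2) by (auto simp: entries_Cons)
  show ?case
  proof (cases rule: row_insert_cases[of x R])
    case none
    have all: "\<forall>z\<in>set R. z < x" using none(2) xR(1) by (metis linorder_neqE_nat)
    then have fR: "filter (\<lambda>z. z < t) R = R" using Cons.prems(3) by (intro filter_True) (auto intro: less_trans)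
    have "row_insert x R = (None, R @ [x])" using none by simp
    then show ?thesis using fR R(1) Cons.prems(3) by (auto simp: restrict_below_Cons)
  next
    case (some A y B)
    have yR: "y \<notin> entries Rs" using R(4) some(1) by auto
    have Ax: "\<forall>a\<in>set A. a < x" using some(3) xR(1) some(1) by (metis in_set_conv_decomp linorder_neqE_nat append_Cons append_assoc)
    have By: "\<forall>b\<in>set B. y < b" using R(2) some(1) by (auto simp: sorted_wrt_append)
    have fA: "filter (\<lambda>z. z < t) A = A" using Ax Cons.prems(3) by (intro filter_True) (auto intro: less_trans)
    show ?thesis
    proof (cases "y < t")
      case True
      have "restrict_below t (rsk_insert y Rs) = rsk_insert y (restrict_below t Rs)" using Cons.IH[OF R(3) yR True] .
      moreover have "filter (\<lambda>z. z < t) R = A @ y # filter (\<lambda>z. z < t) B"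
        using some(1) fA True Cons.prems(3) by auto
      moreover have "filter (\<lambda>z. z < t) (A @ x # B) = A @ x # filter (\<lambda>z. z < t) B"
        using fA Cons.prems(3) by auto
      moreover have "row_insert x (A @ y # filter (\<lambda>z. z < t) B) = (Some y, A @ x # filter (\<lambda>z. z < t) B)"
        using row_insert_bump some(3,4) by blast
      ultimately show ?thesis using some by (auto simp: restrict_below_Cons)
    next
      case False
      have r1: "restrict_below t (rsk_insert y Rs) = restrict_below t Rs" using restrict_below_insert_ge[OF R(3) yR] False by auto
      have fB: "filter (\<lambda>z. z < t) B = []" using By False by (auto simp: filter_empty_conv)
      have fR: "filter (\<lambda>z. z < t) R = A" using some(1) fA fB False Cons.prems(3) by auto
      have fR': "filter (\<lambda>z. z < t) (A @ x # B) = A @ [x]" using fA fB Cons.prems(3) by auto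
      show ?thesis
      proof (cases "A = []")
        case False
        have "row_insert x A = (None, A @ [x])" using row_insert_append some(3) by auto
        then show ?thesis using some r1 fR fR' False by (auto simp: restrict_below_Cons)
      next
        case True
        have "hd R = y" using some(1) True by simp
        then have "\<forall>z\<in>entries Rs. t \<le> z" using tableau_hd_less_entries[OF Cons.prems(1)] False by fastforce
        then have "restrict_below t Rs = []" by (rule restrict_below_empty)
        then show ?thesis using some r1 fR fR' True by (auto simp: restrict_below_Cons)
      qed
    qed
  qed
qed

lemma restrict_below_rsk: "distinct w \<Longrightarrow> restrict_below t (rsk w) = rsk (filter (\<lambda>y. y < t) w)"
proof (induction w rule: rev_induct)
  case Nil then show ?case by simp
next
  case (snoc x w)
  have d: "distinct w" "x \<notin> set w" using snoc.prems by auto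
  have wr: "tableau (rsk w)" "entries (rsk w) = set w" using tableau_rsk[OF d(1)] by auto
  show ?case
  proof (cases "x < t")
    case True
    then show ?thesis using restrict_below_insert_less[OF wr(1) _ True] wr d snoc.IH by auto
  next
    case False
    then show ?thesis using restrict_below_insert_ge[OF wr(1)] wr d snoc.IH by auto
  qed
qed

definition add_at_row :: "nat \<Rightarrow> nat \<Rightarrow> nat list list \<Rightarrow> nat list list" where
  "add_at_row r j T = (if r < length T then T[r := T ! r @ [j]] else T @ [[j]])"

lemma add_at_row_0_Cons: "add_at_row 0 j (R # Rs) = (R @ [j]) # Rs"
  unfolding add_at_row_def by simp

lemma add_at_row_Suc_Cons: "add_at_row (Suc r) j (R # Rs) = R # add_at_row r j Rs"
  unfolding add_at_row_def by auto

lemma add_at_row_Nil: "add_at_row r j [] = [[j]]"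
  unfolding add_at_row_def by simp

lemma shape_add_at_row: "r \<le> length T \<Longrightarrow> shape (add_at_row r j T) = add_cell (shape T) r"
  unfolding shape_def add_at_row_def add_cell_def
  by (auto simp: fun_eq_iff nth_append nth_list_update)

lemma rsk_insert_max: "\<forall>z\<in>entries T. z < j \<Longrightarrow> rsk_insert j T = add_at_row 0 j T"
proof (cases T)
  case Nil then show ?thesis by (simp add: add_at_row_Nil)
next
  case (Cons R Rs)
  assume "\<forall>z\<in>entries T. z < j"
  then have "\<forall>z\<in>set R. \<not> j < z" using Cons by (auto simp: entries_Cons dest: less_asym)
  then show ?thesis using Cons row_insert_append by (simp add: add_at_row_0_Cons)
qed

lemma row_insert_snoc_append: "\<forall>z\<in>set R. \<not> x < z \<Longrightarrow> x < j \<Longrightarrow> row_insert x (R @ [j]) = (Some j, R @ [x])"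
  using row_insert_bump[of R x j "[]"] by simp

lemma row_insert_snoc_bump: "\<forall>a\<in>set A. \<not> x < a \<Longrightarrow> x < y \<Longrightarrow> row_insert x (A @ y # B @ [j]) = (Some y, A @ x # B @ [j])"
  using row_insert_bump[of A x y "B @ [j]"] by simp

lemma rsk_insert_add_at_row:
  assumes "\<forall>z\<in>entries T. z < j" "x < j" "r \<le> length T"
  shows "rsk_insert x (add_at_row r j T) = add_at_row (if new_row x T = r then Suc r else r) j (rsk_insert x T)"
  using assms
proof (induction T arbitrary: x r)
  case Nil
  then show ?case by (simp add: add_at_row_Nil add_at_row_def)
next
  case (Cons R Rs)
  have jR: "\<forall>z\<in>entries Rs. z < j" using Cons.prems(1) by (auto simp: entries_Cons)
  show ?case
  proof (cases r)
    case 0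
    show ?thesis
    proof (cases rule: row_insert_cases[of x R])
      case none
      have "row_insert x (R @ [j]) = (Some j, R @ [x])" using row_insert_snoc_append[OF none(2) Cons.prems(2)] .
      then show ?thesis using 0 none rsk_insert_max[OF jR] by (simp add: add_at_row_0_Cons add_at_row_Suc_Cons)
    next
      case (some A y B)
      have "row_insert x (R @ [j]) = (Some y, A @ x # B @ [j])" using row_insert_snoc_bump[OF some(3) some(4)] some(1) by simp
      then show ?thesis using 0 some by (simp add: add_at_row_0_Cons add_at_row_Suc_Cons)
    qed
  next
    case (Suc r')
    have r': "r' \<le> length Rs" using Cons.prems(3) Suc by simp
    show ?thesis
    proof (cases rule: row_insert_cases[of x R])
      case none
      then show ?thesis using Suc by (simp add: add_at_row_Suc_Cons)
    next
      case (some A y B)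
      have "y < j" using Cons.prems(1) some(1) by (auto simp: entries_Cons)
      then have "rsk_insert y (add_at_row r' j Rs) = add_at_row (if new_row y Rs = r' then Suc r' else r') j (rsk_insert y Rs)"
        using Cons.IH[OF jR _ r'] by auto
      then show ?thesis using Suc some by (simp add: add_at_row_Suc_Cons)
    qed
  qed
qed

lemma length_rsk_insert: "length T \<le> length (rsk_insert x T) \<and> new_row x T < length (rsk_insert x T)"
proof (induction T arbitrary: x)
  case (Cons R Rs)
  then show ?case by (cases rule: row_insert_cases[of x R]) auto
qed simp

lemma shape_rsk_insert_add_at_row:
  assumes "\<forall>z\<in>entries T. z < j" "x < j" "r \<le> length T"
  shows "shape (rsk_insert x (add_at_row r j T)) =
    fomin_fwd (shape T) (add_cell (shape T) (new_row x T)) (add_cell (shape T) r) False"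
proof -
  define s where "s = new_row x T"
  define r' where "r' = (if s = r then Suc r else r)"
  have "r' \<le> length (rsk_insert x T)" using length_rsk_insert[of T x] assms(3) unfolding r'_def s_def by auto
  then have "shape (rsk_insert x (add_at_row r j T)) = add_cell (add_cell (shape T) s) r'"
    using rsk_insert_add_at_row[OF assms] shape_add_at_row shape_rsk_insert unfolding r'_def s_def by simp
  also have "\<dots> = fomin_fwd (shape T) (add_cell (shape T) s) (add_cell (shape T) r) False"
  proof (cases "s = r")
    case True
    then show ?thesis using add_cell_neq Least_add_cell_neq unfolding fomin_fwd_def r'_def by simp
  next
    case False
    then have "add_cell (shape T) s \<noteq> add_cell (shape T) r" using add_cell_inj by metis
    then show ?thesis using False add_cell_neq max_add_cell[OF False] unfolding fomin_fwd_def r'_def by simp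
  qed
  finally show ?thesis unfolding s_def .
qed

lemma sorted_wrt_less_obtain_max:
  assumes "sorted_wrt (<) R" "j \<in> set R" "\<forall>z\<in>set R. z \<le> (j :: nat)"
  obtains A where "R = A @ [j]" "\<forall>z\<in>set A. z < j"
proof -
  obtain A B where AB: "R = A @ j # B" using assms(2) by (meson split_list)
  have "B = []" using assms(1,3) AB by (cases B) (auto simp: sorted_wrt_append)
  then show ?thesis using that AB assms(1) by (auto simp: sorted_wrt_append)
qed

lemma restrict_below_id:
  assumes "tableau T" "\<forall>z\<in>entries T. z < t"
  shows "restrict_below t T = T"
proof -
  have "\<forall>S\<in>set T. filter (\<lambda>y. y < t) S = S \<and> S \<noteq> []"
    using assms unfolding tableau_def entries_def by auto
  then show ?thesis unfolding restrict_below_def by (induction T) auto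
qed

lemma tableau_remove_max:
  assumes "tableau T" "j \<in> entries T" "\<forall>z\<in>entries T. z \<le> j"
  shows "\<exists>r\<le>length (restrict_below j T). T = add_at_row r j (restrict_below j T)"
  using assms
proof (induction T)
  case Nil then show ?case unfolding entries_def by simp
next
  case (Cons R Rs)
  have R: "sorted_wrt (<) R" "tableau Rs" "\<forall>S\<in>set Rs. hd R < hd S" "set R \<inter> entries Rs = {}"
    using Cons.prems(1) unfolding tableau_Cons by auto
  show ?case
  proof (cases "j \<in> set R")
    case True
    obtain A where A: "R = A @ [j]" "\<forall>z\<in>set A. z < j"
      using sorted_wrt_less_obtain_max[OF R(1) True] Cons.prems(3) by (auto simp: entries_Cons)
    have "\<forall>z\<in>entries Rs. z < j" using Cons.prems(3) R(4) True by (auto simp: entries_Cons le_less)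
    then have Rs: "restrict_below j Rs = Rs" using R(2) restrict_below_id by blast
    show ?thesis
    proof (cases "A = []")
      case False
      then show ?thesis using A Rs by (auto simp: restrict_below_Cons add_at_row_0_Cons intro!: exI[of _ 0])
    next
      case True
      have "Rs = []"
      proof (rule ccontr)
        assume "Rs \<noteq> []"
        then obtain S where S: "S \<in> set Rs" by (meson list.set_sel(1))
        moreover have "S \<noteq> []" using R(2) S unfolding tableau_def by auto
        ultimately have "hd S \<in> entries Rs" unfolding entries_def using S by (auto intro: bexI[of _ S])
        moreover have "j < hd S" using R(3) S A True by auto
        ultimately show False using Cons.prems(3) by (force simp: entries_Cons)
      qed
      then show ?thesis using A True by (auto simp: restrict_below_Cons add_at_row_Nil)
    qed
  next
    case False
    have jRs: "j \<in> entries Rs" using False Cons.prems(2) by (auto simp: entries_Cons)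
    obtain r where r: "r \<le> length (restrict_below j Rs)" "Rs = add_at_row r j (restrict_below j Rs)"
      using Cons.IH[OF R(2) jRs] Cons.prems(3) by (auto simp: entries_Cons)
    have "\<forall>z\<in>set R. z < j" using False Cons.prems(3) by (auto simp: entries_Cons le_less)
    then have "filter (\<lambda>y. y < j) R = R" by simp
    then show ?thesis using Cons.prems(1) r
      by (auto simp: restrict_below_Cons add_at_row_Suc_Cons tableau_Cons intro!: exI[of _ "Suc r"])
  qed
qed

section \<open>The growth diagram of a permutation computes RSK shapes\<close>

definition rect_word :: "(nat \<Rightarrow> nat) \<Rightarrow> nat \<Rightarrow> nat \<Rightarrow> nat list" where
  "rect_word p i j = map p (filter (\<lambda>k. p k < j) [0..<i])"

definition perm_graph :: "(nat \<Rightarrow> nat) \<Rightarrow> nat \<Rightarrow> (nat \<times> nat) set" where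
  "perm_graph p n = (\<lambda>k. (k, p k)) ` {..<n}"

lemma partial_perm_graph: "inj_on p {..<n} \<Longrightarrow> partial_perm (perm_graph p n)"
  unfolding partial_perm_def perm_graph_def by (auto dest: inj_onD)

lemma rect_word_Suc_left: "rect_word p (Suc i) j = rect_word p i j @ (if p i < j then [p i] else [])"
  unfolding rect_word_def by auto

lemma filter_rect_word: "filter (\<lambda>y. y < j) (rect_word p i (Suc j)) = rect_word p i j"
  unfolding rect_word_def by (simp add: filter_map filter_filter o_def) (metis less_Suc_eq)

lemma rect_word_Suc_right:
  assumes "\<not> (\<exists>k<i. p k = j)"
  shows "rect_word p i (Suc j) = rect_word p i j"
proof -
  have "filter (\<lambda>k. p k < Suc j) [0..<i] = filter (\<lambda>k. p k < j) [0..<i]"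
  proof (rule filter_cong)
    fix k assume "k \<in> set [0..<i]"
    then have "p k \<noteq> j" using assms by auto
    then show "(p k < Suc j) = (p k < j)" by auto
  qed simp
  then show ?thesis unfolding rect_word_def by simp
qed

lemma rect_word_less: "z \<in> set (rect_word p i j) \<Longrightarrow> z < j"
  unfolding rect_word_def by auto

lemma distinct_rect_word:
  assumes "inj_on p {..<n}" "i \<le> n"
  shows "distinct (rect_word p i j)"
proof -
  have "inj_on p (set [0..<i])" using assms(2) by (intro inj_on_subset[OF assms(1)]) auto
  then show ?thesis unfolding rect_word_def by (intro distinct_map_filter) (simp add: distinct_map)
qed

lemma perm_graph_iff: "i < n \<Longrightarrow> (i, j) \<in> perm_graph p n \<longleftrightarrow> p i = j"
  unfolding perm_graph_def by auto

lemma growth_eq_shape_rsk: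
  assumes inj: "inj_on p {..<n}" and "i \<le> n"
  shows "growth (perm_graph p n) i j = shape (rsk (rect_word p i j))"
  using assms(2)
proof (induction "i + j" arbitrary: i j rule: less_induct)
  case less
  show ?case
  proof (cases "i = 0 \<or> j = 0")
    case True
    then have "rect_word p i j = []" unfolding rect_word_def by auto
    then show ?thesis using True by (auto simp: shape_Nil)
  next
    case False
    then obtain i' j' where ij: "i = Suc i'" "j = Suc j'" by (meson not0_implies_Suc)
    let ?X = "perm_graph p n"
    have i'n: "i' < n" using less.prems ij by auto
    define T where "T = rsk (rect_word p i' j')"
    have l: "growth ?X i' j' = shape T"
      using less.hyps[of i' j'] ij i'n unfolding T_def by auto
    have m: "growth ?X (Suc i') j' = shape (rsk (rect_word p (Suc i') j'))"
      using less.hyps[of "Suc i'" j'] ij less.prems by auto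
    have v: "growth ?X i' (Suc j') = shape (rsk (rect_word p i' (Suc j')))"
      using less.hyps[of i' "Suc j'"] ij i'n by auto
    have g: "growth ?X i j = fomin_fwd (shape T) (growth ?X (Suc i') j') (growth ?X i' (Suc j')) (p i' = j')"
      using ij l perm_graph_iff[OF i'n] by simp
    have wT: "tableau T" "entries T = set (rect_word p i' j')"
      using tableau_rsk distinct_rect_word[OF inj] i'n unfolding T_def by auto
    have Tlt: "\<forall>z\<in>entries T. z < j'" using wT(2) rect_word_less by auto
    consider (point) "p i' = j'" | (above) "j' < p i'" | (new) "p i' < j'" "\<not> (\<exists>k<i'. p k = j')"
      | (old) "p i' < j'" "\<exists>k<i'. p k = j'"
      by (meson linorder_neqE_nat)
    then show ?thesis
    proof cases
      case point
      have "\<not> (\<exists>k<i'. p k = j')" using point inj i'n by (auto dest: inj_onD)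
      then have "rect_word p i j = rect_word p i' j' @ [j']"
        using ij point rect_word_Suc_left[of p i' "Suc j'"] rect_word_Suc_right by simp
      then have "rsk (rect_word p i j) = add_at_row 0 j' T" using rsk_insert_max[OF Tlt] unfolding T_def by simp
      then show ?thesis using g point shape_add_at_row unfolding fomin_fwd_def by simp
    next
      case above
      have "growth ?X (Suc i') j' = shape T" using m above rect_word_Suc_left unfolding T_def by simp
      moreover have "rect_word p i j = rect_word p i' (Suc j')" using ij above rect_word_Suc_left by simp
      ultimately show ?thesis using g v above unfolding fomin_fwd_def by simp
    next
      case new
      have mm: "growth ?X (Suc i') j' = add_cell (shape T) (new_row (p i') T)"
        using m new rect_word_Suc_left shape_rsk_insert unfolding T_def by simp
      have "rect_word p i' (Suc j') = rect_word p i' j'" using rect_word_Suc_right new(2) .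
      moreover have "rect_word p i j = rect_word p i' (Suc j') @ [p i']" using ij new rect_word_Suc_left by simp
      ultimately show ?thesis using g mm v new add_cell_neq shape_rsk_insert unfolding T_def fomin_fwd_def by simp
    next
      case old
      define T' where "T' = rsk (rect_word p i' (Suc j'))"
      have wT': "tableau T'" "entries T' = set (rect_word p i' (Suc j'))"
        using tableau_rsk distinct_rect_word[OF inj] i'n unfolding T'_def by auto
      have "j' \<in> entries T'" using wT'(2) old(2) unfolding rect_word_def by force
      moreover have "\<forall>z\<in>entries T'. z \<le> j'" using wT'(2) rect_word_less by (metis less_Suc_eq_le)
      moreover have "restrict_below j' T' = T"
        unfolding T'_def T_def using restrict_below_rsk distinct_rect_word[OF inj] i'n filter_rect_word by simp
      ultimately obtain r where r: "r \<le> length T" "T' = add_at_row r j' T"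
        using tableau_remove_max[OF wT'(1)] by metis
      have "growth ?X i' (Suc j') = add_cell (shape T) r" using v r shape_add_at_row unfolding T'_def by simp
      moreover have "growth ?X (Suc i') j' = add_cell (shape T) (new_row (p i') T)"
        using m old rect_word_Suc_left shape_rsk_insert unfolding T_def by simp
      moreover have "rsk (rect_word p i j) = rsk_insert (p i') (add_at_row r j' T)"
        using ij old r(2) rect_word_Suc_left unfolding T'_def by simp
      ultimately show ?thesis using g old shape_rsk_insert_add_at_row[OF Tlt old(1) r(1)] by simp
    qed
  qed
qed

section \<open>The first row of the growth diagram\<close>

definition ne_chain :: "(nat \<times> nat) set \<Rightarrow> bool" where
  "ne_chain C \<longleftrightarrow> (\<forall>a\<in>C. \<forall>b\<in>C. fst a < fst b \<longrightarrow> snd a < snd b)"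

definition has_chain :: "(nat \<times> nat) set \<Rightarrow> nat \<Rightarrow> bool" where
  "has_chain S k \<longleftrightarrow> (\<exists>C\<subseteq>S. finite C \<and> card C = k \<and> ne_chain C)"

lemma ne_chainD: "ne_chain C \<Longrightarrow> (a, b) \<in> C \<Longrightarrow> (a', b') \<in> C \<Longrightarrow> a < a' \<Longrightarrow> b < b'"
  unfolding ne_chain_def by force

lemma ne_chain_subset: "ne_chain C \<Longrightarrow> C' \<subseteq> C \<Longrightarrow> ne_chain C'"
  unfolding ne_chain_def by blast

lemma ne_chain_insert:
  "ne_chain C \<Longrightarrow> \<forall>q\<in>C. fst q < fst c \<and> snd q < snd c \<Longrightarrow> ne_chain (insert c C)"
  unfolding ne_chain_def by auto

lemma has_chain_empty: "has_chain {} k \<longleftrightarrow> k = 0"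
  unfolding has_chain_def ne_chain_def by auto

lemma has_chain_0: "has_chain S 0"
  unfolding has_chain_def ne_chain_def by (rule exI[of _ "{}"]) auto

lemma has_chain_le:
  assumes "has_chain S k" "k' \<le> k"
  shows "has_chain S k'"
proof -
  obtain C where C: "C \<subseteq> S" "finite C" "card C = k" "ne_chain C"
    using assms(1) unfolding has_chain_def by auto
  obtain C' where C': "C' \<subseteq> C" "card C' = k'" "finite C'"
    using obtain_subset_with_card_n[of k' C] assms(2) C(3) by auto
  moreover have "C' \<subseteq> S" "ne_chain C'" using C(1,4) C'(1) ne_chain_subset by auto
  ultimately show ?thesis unfolding has_chain_def by blast
qed

lemma has_chain_Un:
  assumes "\<forall>a\<in>A - B. \<forall>b\<in>B - A. fst b < fst a \<and> snd a < snd b"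
  shows "has_chain (A \<union> B) k \<longleftrightarrow> has_chain A k \<or> has_chain B k"
proof
  assume "has_chain (A \<union> B) k"
  then obtain C where C: "C \<subseteq> A \<union> B" "finite C" "card C = k" "ne_chain C"
    unfolding has_chain_def by auto
  have "C \<subseteq> A \<or> C \<subseteq> B"
  proof (rule ccontr)
    assume "\<not> (C \<subseteq> A \<or> C \<subseteq> B)"
    then obtain a b where ab: "a \<in> C" "a \<in> A - B" "b \<in> C" "b \<in> B - A" using C(1) by blast
    then have "fst b < fst a" "snd a < snd b" using assms by auto
    then show False using C(4) ab(1,3) unfolding ne_chain_def by force
  qed
  then show "has_chain A k \<or> has_chain B k" using C unfolding has_chain_def by blast
next
  assume "has_chain A k \<or> has_chain B k"
  then show "has_chain (A \<union> B) k" unfolding has_chain_def by blast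
qed

lemma has_chain_insert_max:
  assumes "\<forall>q\<in>S. fst q < fst c \<and> snd q < snd c"
  shows "has_chain (insert c S) (Suc k) \<longleftrightarrow> has_chain S k"
proof
  assume "has_chain (insert c S) (Suc k)"
  then obtain C where C: "C \<subseteq> insert c S" "finite C" "card C = Suc k" "ne_chain C"
    unfolding has_chain_def by auto
  have "C - {c} \<subseteq> S" "finite (C - {c})" "k \<le> card (C - {c})"
    using C(1-3) by (auto simp: card_Diff_singleton_if)
  moreover have "ne_chain (C - {c})" using C(4) ne_chain_subset by blast
  ultimately show "has_chain S k" using has_chain_le[of S "card (C - {c})" k] unfolding has_chain_def by blast
next
  assume "has_chain S k"
  then obtain C where C: "C \<subseteq> S" "finite C" "card C = k" "ne_chain C"
    unfolding has_chain_def by auto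
  moreover have "c \<notin> C" using C(1) assms by auto
  ultimately have "insert c C \<subseteq> insert c S" "finite (insert c C)" "card (insert c C) = Suc k"
    "ne_chain (insert c C)"
    using assms by (auto intro: ne_chain_insert)
  then show "has_chain (insert c S) (Suc k)" unfolding has_chain_def by blast
qed

lemma fomin_fwd_0:
  assumes "cell_step l m" "cell_step l v"
  shows "fomin_fwd l m v False 0 = max (m 0) (v 0)"
proof -
  have "l 0 \<le> m 0" "l 0 \<le> v 0" using assms cell_step_le by (auto simp: le_fun_def)
  then show ?thesis unfolding fomin_fwd_def add_cell_def by auto
qed

lemma growth_0_iff_has_chain:
  assumes X: "partial_perm X"
  shows "k \<le> growth X i j 0 \<longleftrightarrow> has_chain (X \<inter> rect i j) k"
proof (induction "i + j" arbitrary: i j k rule: less_induct)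
  case less
  show ?case
  proof (cases "i = 0 \<or> j = 0")
    case True
    then have "X \<inter> rect i j = {}" unfolding rect_def by auto
    then show ?thesis using True has_chain_empty by (auto simp: empty_shape_def)
  next
    case False
    then obtain i' j' where ij: "i = Suc i'" "j = Suc j'" by (meson not0_implies_Suc)
    have g: "growth X i j = fomin_fwd (growth X i' j') (growth X (Suc i') j') (growth X i' (Suc j')) ((i', j') \<in> X)"
      using ij by simp
    show ?thesis
    proof (cases "(i', j') \<in> X")
      case True
      have "X \<inter> rect i j = insert (i', j') (X \<inter> rect i' j')"
      proof (intro set_eqI iffI)
        fix q assume q: "q \<in> X \<inter> rect i j"
        show "q \<in> insert (i', j') (X \<inter> rect i' j')"
        proof (cases "fst q = i' \<or> snd q = j'")
          case True then show ?thesis using partial_permD[OF X _ \<open>(i', j') \<in> X\<close>] q by auto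
        next
          case False then show ?thesis using q ij unfolding rect_def by auto
        qed
      qed (use True ij in \<open>auto simp: rect_def\<close>)
      moreover have "\<forall>q\<in>X \<inter> rect i' j'. fst q < i' \<and> snd q < j'" unfolding rect_def by auto
      ultimately have "has_chain (X \<inter> rect i j) (Suc k') \<longleftrightarrow> has_chain (X \<inter> rect i' j') k'" for k'
        using has_chain_insert_max by simp
      moreover have "growth X i j 0 = Suc (growth X i' j' 0)" using g True unfolding fomin_fwd_def add_cell_def by simp
      ultimately show ?thesis using less.hyps[of i' j'] ij has_chain_0 by (cases k) auto
    next
      case False
      have S: "X \<inter> rect i j = (X \<inter> rect (Suc i') j') \<union> (X \<inter> rect i' (Suc j'))"
        using False ij unfolding rect_def by (auto simp: less_Suc_eq)
      have val: "growth X i j 0 = max (growth X (Suc i') j' 0) (growth X i' (Suc j') 0)"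
        using g False fomin_fwd_0 growth_invariant_holds[OF X, of i' j'] unfolding growth_invariant_def by auto
      have "\<forall>a\<in>X \<inter> rect (Suc i') j' - X \<inter> rect i' (Suc j'). \<forall>b\<in>X \<inter> rect i' (Suc j') - X \<inter> rect (Suc i') j'.
          fst b < fst a \<and> snd a < snd b"
        unfolding rect_def by (auto simp: less_Suc_eq)
      then have "has_chain (X \<inter> rect i j) k \<longleftrightarrow> has_chain (X \<inter> rect (Suc i') j') k \<or> has_chain (X \<inter> rect i' (Suc j')) k"
        unfolding S by (rule has_chain_Un)
      also have "\<dots> \<longleftrightarrow> k \<le> growth X (Suc i') j' 0 \<or> k \<le> growth X i' (Suc j') 0"
        using less.hyps[of "Suc i'" j'] less.hyps[of i' "Suc j'"] ij by auto
      finally show ?thesis using val by auto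
    qed
  qed
qed

section \<open>Knuth equivalence and longest decreasing subsequences\<close>

definition has_decr :: "nat list \<Rightarrow> nat \<Rightarrow> bool" where
  "has_decr w k \<longleftrightarrow> (\<exists>s. subseq s w \<and> sorted_wrt (>) s \<and> length s = k)"

definition knuth_step :: "nat list \<Rightarrow> nat list \<Rightarrow> bool" where
  "knuth_step u v \<longleftrightarrow> (\<exists>pre suf a b c. a < b \<and> b < c \<and>
     ((u = pre @ [b, c, a] @ suf \<and> v = pre @ [b, a, c] @ suf) \<or>
      (u = pre @ [a, c, b] @ suf \<and> v = pre @ [c, a, b] @ suf)))"

definition knuth_equiv :: "nat list \<Rightarrow> nat list \<Rightarrow> bool" where
  "knuth_equiv = (\<lambda>u v. knuth_step u v \<or> knuth_step v u)\<^sup>*\<^sup>*"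

lemma knuth_equiv_refl[simp]: "knuth_equiv u u" unfolding knuth_equiv_def by simp

lemma knuth_equiv_trans: "knuth_equiv u v \<Longrightarrow> knuth_equiv v w \<Longrightarrow> knuth_equiv u w"
  unfolding knuth_equiv_def by (rule rtranclp_trans)

lemma knuth_equiv_step: "knuth_step u v \<Longrightarrow> knuth_equiv u v"
  unfolding knuth_equiv_def by auto

lemma knuth_step_append:
  assumes "knuth_step u v"
  shows "knuth_step (p @ u @ s) (p @ v @ s)"
proof -
  obtain pre suf a b c where "a < b" "b < c"
    "(u = pre @ [b, c, a] @ suf \<and> v = pre @ [b, a, c] @ suf) \<or> (u = pre @ [a, c, b] @ suf \<and> v = pre @ [c, a, b] @ suf)"
    using assms unfolding knuth_step_def by blast
  then show ?thesis unfolding knuth_step_def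
    by (intro exI[of _ "p @ pre"] exI[of _ "suf @ s"] exI[of _ a] exI[of _ b] exI[of _ c]) auto
qed

lemma knuth_equiv_append: "knuth_equiv u v \<Longrightarrow> knuth_equiv (p @ u @ s) (p @ v @ s)"
  unfolding knuth_equiv_def
proof (induction rule: rtranclp_induct)
  case base then show ?case by simp
next
  case (step y z)
  then have r: "(\<lambda>u v. knuth_step u v \<or> knuth_step v u) (p @ y @ s) (p @ z @ s)" using knuth_step_append by blast
  show ?case by (rule rtranclp.rtrancl_into_rtrancl[OF step.IH r])
qed

lemma knuth_equiv_sym: "knuth_equiv u v \<Longrightarrow> knuth_equiv v u"
  unfolding knuth_equiv_def
proof (induction rule: rtranclp_induct)
  case base then show ?case by simp
next
  case (step y z)
  then have r: "(\<lambda>u v. knuth_step u v \<or> knuth_step v u) z y" by blast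
  show ?case by (rule converse_rtranclp_into_rtranclp[OF r step.IH])
qed

lemma subseq_Cons_cases: "subseq t (x # ys) \<Longrightarrow> subseq t ys \<or> (\<exists>t'. t = x # t' \<and> subseq t' ys)"
  by (cases t) (auto split: if_splits)

lemma subseq_three: "subseq t [x, y, z] \<Longrightarrow> t = [] \<or> t = [x] \<or> t = [y] \<or> t = [z] \<or> t = [x, y] \<or> t = [x, z] \<or> t = [y, z] \<or> t = [x, y, z]"
  by (drule subseq_Cons_cases, elim disjE exE conjE; drule subseq_Cons_cases, elim disjE exE conjE;
      drule subseq_Cons_cases, elim disjE exE conjE) auto

text \<open>Every decreasing subsequence of \<open>m\<close> can be traded for one of \<open>m'\<close> of the same length whose
  entries stay within its range; the range condition keeps the trade compatible with any
  surrounding prefix and suffix.\<close>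

definition decr_dominated :: "nat list \<Rightarrow> nat list \<Rightarrow> bool" where
  "decr_dominated m m' \<longleftrightarrow> (\<forall>t. subseq t m \<longrightarrow> sorted_wrt (>) t \<longrightarrow>
     (\<exists>t'. subseq t' m' \<and> sorted_wrt (>) t' \<and> length t' = length t
        \<and> (\<forall>z\<in>set t'. \<exists>a\<in>set t. \<exists>b\<in>set t. a \<le> z \<and> z \<le> b)))"

lemma has_decr_transfer:
  assumes "decr_dominated m m'" "has_decr (p @ m @ s) k"
  shows "has_decr (p @ m' @ s) k"
proof -
  obtain u where u: "subseq u (p @ m @ s)" "sorted_wrt (>) u" "length u = k"
    using assms(2) unfolding has_decr_def by auto
  obtain u1 u23 where u1: "u = u1 @ u23" "subseq u1 p" "subseq u23 (m @ s)"
    using u(1) by (auto elim: subseq_appendE)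
  obtain u2 u3 where u2: "u23 = u2 @ u3" "subseq u2 m" "subseq u3 s"
    using u1(3) by (auto elim: subseq_appendE)
  have so: "sorted_wrt (>) u1" "sorted_wrt (>) u2" "sorted_wrt (>) u3"
    "\<forall>x\<in>set u1. \<forall>y\<in>set u2. y < x" "\<forall>x\<in>set u1. \<forall>y\<in>set u3. y < x" "\<forall>x\<in>set u2. \<forall>y\<in>set u3. y < x"
    using u(2) unfolding u1(1) u2(1) by (auto simp: sorted_wrt_append)
  obtain t' where t': "subseq t' m'" "sorted_wrt (>) t'" "length t' = length u2"
    "\<forall>z\<in>set t'. \<exists>a\<in>set u2. \<exists>b\<in>set u2. a \<le> z \<and> z \<le> b"
    using assms(1) u2(2) so(2) unfolding decr_dominated_def by blast
  have c1: "\<forall>x\<in>set u1. \<forall>y\<in>set t'. y < x"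
  proof (intro ballI)
    fix x y assume "x \<in> set u1" "y \<in> set t'"
    then obtain b where "b \<in> set u2" "y \<le> b" using t'(4) by blast
    then show "y < x" using so(4) \<open>x \<in> set u1\<close> by (meson le_less_trans)
  qed
  have c2: "\<forall>x\<in>set t'. \<forall>y\<in>set u3. y < x"
  proof (intro ballI)
    fix x y assume "x \<in> set t'" "y \<in> set u3"
    then obtain a where "a \<in> set u2" "a \<le> x" using t'(4) by blast
    then show "y < x" using so(6) \<open>y \<in> set u3\<close> by (meson less_le_trans)
  qed
  have "sorted_wrt (>) (u1 @ t' @ u3)" using so c1 c2 t'(2) by (auto simp: sorted_wrt_append)
  moreover have "subseq (u1 @ t' @ u3) (p @ m' @ s)" using u1(2) t'(1) u2(3)
    by (intro list_emb_append_mono) auto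
  moreover have "length (u1 @ t' @ u3) = k" using u(3) t'(3) u1(1) u2(1) by simp
  ultimately show ?thesis unfolding has_decr_def by blast
qed

lemma knuth_step_has_decr:
  assumes "knuth_step u v"
  shows "has_decr u k \<longleftrightarrow> has_decr v k"
proof -
  obtain pre suf a b c where abc: "a < b" "b < c"
    "(u = pre @ [b, c, a] @ suf \<and> v = pre @ [b, a, c] @ suf) \<or> (u = pre @ [a, c, b] @ suf \<and> v = pre @ [c, a, b] @ suf)"
    using assms unfolding knuth_step_def by blast
  have keep: "decr_dominated m m'" if "\<And>t. subseq t m \<Longrightarrow> sorted_wrt (>) t \<Longrightarrow> subseq t m'" for m m'
    unfolding decr_dominated_def using that by blast
  have "decr_dominated [b, a, c] [b, c, a]" "decr_dominated [a, c, b] [c, a, b]"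
    by (rule keep; use abc in \<open>auto dest!: subseq_three\<close>)+
  moreover have "decr_dominated [b, c, a] [b, a, c]" unfolding decr_dominated_def
  proof (intro allI impI)
    fix t assume t: "subseq t [b, c, a]" "sorted_wrt (>) t"
    show "\<exists>t'. subseq t' [b, a, c] \<and> sorted_wrt (>) t' \<and> length t' = length t
        \<and> (\<forall>z\<in>set t'. \<exists>a\<in>set t. \<exists>b\<in>set t. a \<le> z \<and> z \<le> b)"
    proof (cases "t = [c, a]")
      case True
      then show ?thesis using abc by (intro exI[of _ "[b, a]"]) auto
    next
      case False
      then show ?thesis using subseq_three[OF t(1)] t(2) abc by (intro exI[of _ t]) auto
    qed
  qed
  moreover have "decr_dominated [c, a, b] [a, c, b]" unfolding decr_dominated_def
  proof (intro allI impI)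
    fix t assume t: "subseq t [c, a, b]" "sorted_wrt (>) t"
    show "\<exists>t'. subseq t' [a, c, b] \<and> sorted_wrt (>) t' \<and> length t' = length t
        \<and> (\<forall>z\<in>set t'. \<exists>a\<in>set t. \<exists>b\<in>set t. a \<le> z \<and> z \<le> b)"
    proof (cases "t = [c, a]")
      case True
      then show ?thesis using abc by (intro exI[of _ "[c, b]"]) auto
    next
      case False
      then show ?thesis using subseq_three[OF t(1)] t(2) abc by (intro exI[of _ t]) auto
    qed
  qed
  ultimately show ?thesis using abc(3) has_decr_transfer by blast
qed

lemma knuth_equiv_has_decr: "knuth_equiv u v \<Longrightarrow> has_decr u k \<longleftrightarrow> has_decr v k"
  unfolding knuth_equiv_def
proof (induction rule: rtranclp_induct)
  case base then show ?case by simp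
next
  case (step y z)
  then show ?case using knuth_step_has_decr by blast
qed

definition reading_word :: "nat list list \<Rightarrow> nat list" where
  "reading_word T = concat (List.rev T)"

lemma reading_word_Cons: "reading_word (R # Rs) = reading_word Rs @ R"
  unfolding reading_word_def by simp

lemma knuth_equiv_move_right:
  assumes "sorted_wrt (<) (y # B)" "x < y"
  shows "knuth_equiv (y # B @ [x]) (y # x # B)"
  using assms
proof (induction B arbitrary: y)
  case Nil then show ?case by simp
next
  case (Cons b B')
  have xb: "x < b" "y < b" using Cons.prems by auto
  have "knuth_equiv (b # B' @ [x]) (b # x # B')" using Cons.IH[of b] Cons.prems xb by auto
  then have first: "knuth_equiv (y # b # B' @ [x]) (y # b # x # B')" using knuth_equiv_append[of _ _ "[y]" "[]"] by simp
  have "knuth_step (y # b # x # B') (y # x # b # B')"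
    unfolding knuth_step_def using Cons.prems xb
    by (intro exI[of _ "[]"] exI[of _ B'] exI[of _ x] exI[of _ y] exI[of _ b]) auto
  then show ?case using first knuth_equiv_step knuth_equiv_trans by (metis append_Cons)
qed

lemma knuth_equiv_move_left:
  assumes "sorted_wrt (<) (A @ [x])" "x < y"
  shows "knuth_equiv (A @ y # x # rest) (y # A @ x # rest)"
  using assms
proof (induction A arbitrary: x rest rule: rev_induct)
  case Nil then show ?case by simp
next
  case (snoc a A')
  have ax: "a < x" using snoc.prems(1) by (auto simp: sorted_wrt_append)
  have "knuth_step ([a, y, x] @ rest) ([y, a, x] @ rest)"
    unfolding knuth_step_def using ax snoc.prems(2)
    by (intro exI[of _ "[]"] exI[of _ rest] exI[of _ a] exI[of _ x] exI[of _ y]) auto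
  then have first: "knuth_equiv (A' @ a # y # x # rest) (A' @ y # a # x # rest)"
    using knuth_equiv_append[of _ _ A' "[]"] knuth_equiv_step by simp
  have "sorted_wrt (<) (A' @ [a])" using snoc.prems(1) by (auto simp: sorted_wrt_append)
  then have "knuth_equiv (A' @ y # a # (x # rest)) (y # A' @ a # (x # rest))"
    using snoc.IH[of a "x # rest"] ax snoc.prems(2) by auto
  then show ?case using first knuth_equiv_trans by simp
qed

lemma knuth_equiv_bump:
  assumes "sorted_wrt (<) (A @ y # B)" "\<forall>a\<in>set A. a < x" "x < y"
  shows "knuth_equiv (A @ y # B @ [x]) (y # A @ x # B)"
proof -
  have "knuth_equiv (y # B @ [x]) (y # x # B)" using knuth_equiv_move_right assms by (auto simp: sorted_wrt_append)
  then have first: "knuth_equiv (A @ y # B @ [x]) (A @ y # x # B)" using knuth_equiv_append[of _ _ A "[]"] by simp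
  have "sorted_wrt (<) (A @ [x])" using assms by (auto simp: sorted_wrt_append)
  then have "knuth_equiv (A @ y # x # B) (y # A @ x # B)" using knuth_equiv_move_left assms(3) by blast
  then show ?thesis using first knuth_equiv_trans by blast
qed

lemma knuth_equiv_rsk_insert:
  assumes "tableau T" "x \<notin> entries T"
  shows "knuth_equiv (reading_word (rsk_insert x T)) (reading_word T @ [x])"
  using assms
proof (induction T arbitrary: x)
  case Nil then show ?case by (simp add: reading_word_def)
next
  case (Cons R Rs)
  have R: "sorted_wrt (<) R" "tableau Rs" "set R \<inter> entries Rs = {}" using Cons.prems(1) unfolding tableau_Cons by auto
  have xR: "x \<notin> set R" using Cons.prems(2) by (auto simp: entries_Cons)
  show ?case
  proof (cases rule: row_insert_cases[of x R])
    case none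
    then show ?thesis by (simp add: reading_word_Cons)
  next
    case (some A y B)
    have yRs: "y \<notin> entries Rs" using R(3) some(1) by auto
    have Ax: "\<forall>a\<in>set A. a < x" using some(3) xR some(1) by (metis in_set_conv_decomp linorder_neqE_nat append_Cons append_assoc)
    have "knuth_equiv (reading_word (rsk_insert y Rs)) (reading_word Rs @ [y])" using Cons.IH[OF R(2) yRs] .
    from knuth_equiv_append[OF this, of "[]" "A @ x # B"]
    have first: "knuth_equiv (reading_word (rsk_insert y Rs) @ A @ x # B) (reading_word Rs @ y # A @ x # B)" by simp
    have "knuth_equiv (A @ y # B @ [x]) (y # A @ x # B)" using knuth_equiv_bump R(1) some Ax by blast
    then have row: "knuth_equiv (reading_word Rs @ A @ y # B @ [x]) (reading_word Rs @ y # A @ x # B)"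
      using knuth_equiv_append[of _ _ "reading_word Rs" "[]"] by simp
    have "knuth_equiv (reading_word Rs @ y # A @ x # B) (reading_word Rs @ A @ y # B @ [x])"
      using row by (rule knuth_equiv_sym)
    then have "knuth_equiv (reading_word (rsk_insert y Rs) @ A @ x # B) (reading_word Rs @ A @ y # B @ [x])" using first knuth_equiv_trans by blast
    then show ?thesis using some by (simp add: reading_word_Cons)
  qed
qed

lemma knuth_equiv_rsk: "distinct w \<Longrightarrow> knuth_equiv (reading_word (rsk w)) w"
proof (induction w rule: rev_induct)
  case Nil then show ?case by (simp add: reading_word_def)
next
  case (snoc x w)
  have d: "distinct w" "x \<notin> set w" using snoc.prems by auto
  have wr: "tableau (rsk w)" "entries (rsk w) = set w" using tableau_rsk[OF d(1)] by auto
  have "knuth_equiv (reading_word (rsk_insert x (rsk w))) (reading_word (rsk w) @ [x])" using knuth_equiv_rsk_insert wr d by auto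
  moreover have "knuth_equiv (reading_word (rsk w) @ [x]) (w @ [x])" using knuth_equiv_append[of _ _ "[]" "[x]"] snoc.IH d by simp
  ultimately show ?case using knuth_equiv_trans by simp
qed

lemma subseq_sorted_wrt: "subseq s w \<Longrightarrow> sorted_wrt R w \<Longrightarrow> sorted_wrt R s"
proof (induction rule: list_emb.induct)
  case (list_emb_Cons xs ys y)
  then show ?case by simp
next
  case (list_emb_Cons2 x y xs ys)
  then show ?case using list_emb_set[OF list_emb_Cons2(2)] by auto
qed simp

lemma has_decr_reading_word_le:
  assumes "tableau T" "subseq s (reading_word T)" "sorted_wrt (>) s"
  shows "length s \<le> length T"
  using assms
proof (induction T arbitrary: s)
  case Nil then show ?case by (simp add: reading_word_def)
next
  case (Cons R Rs)
  obtain s1 s2 where s: "s = s1 @ s2" "subseq s1 (reading_word Rs)" "subseq s2 R"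
    using Cons.prems(2) unfolding reading_word_Cons by (auto elim: subseq_appendE)
  have "sorted_wrt (<) R" "tableau Rs" using Cons.prems(1) unfolding tableau_Cons by auto
  then have inc: "sorted_wrt (<) s2" using subseq_sorted_wrt s(3) by auto
  have dec: "sorted_wrt (>) s2" "sorted_wrt (>) s1" using Cons.prems(3) s(1) by (auto simp: sorted_wrt_append)
  have "length s2 \<le> 1"
  proof (rule ccontr)
    assume "\<not> length s2 \<le> 1"
    then obtain u v r where "s2 = u # v # r" by (metis One_nat_def Suc_le_eq length_0_conv length_Cons list.exhaust not_less_zero le_less)
    then show False using inc dec by auto
  qed
  moreover have "length s1 \<le> length Rs" using Cons.IH[OF \<open>tableau Rs\<close> s(2) dec(2)] .
  ultimately show ?case using s(1) by simp
qed

lemma subseq_map_hd: "\<forall>R\<in>set L. R \<noteq> [] \<Longrightarrow> subseq (map hd L) (concat L)"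
proof (induction L)
  case (Cons R L)
  then obtain r R' where "R = r # R'" by (meson list.exhaust list.set_intros(1))
  then show ?case using Cons by (auto intro: subseq_drop_many)
qed simp

lemma has_decr_reading_word_iff:
  assumes "tableau T"
  shows "has_decr (reading_word T) k \<longleftrightarrow> k \<le> length T"
proof
  assume "has_decr (reading_word T) k"
  then show "k \<le> length T" using has_decr_reading_word_le assms unfolding has_decr_def by blast
next
  assume k: "k \<le> length T"
  define s where "s = map hd (List.rev T)"
  have ss: "subseq s (reading_word T)" unfolding s_def reading_word_def
    using assms unfolding tableau_def by (intro subseq_map_hd) auto
  have "sorted_wrt (\<lambda>R S. hd R < hd S) T" using assms unfolding tableau_def by auto
  then have so: "sorted_wrt (>) s" unfolding s_def by (simp add: sorted_wrt_rev sorted_wrt_map)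
  have "subseq (take k s) s" by (metis append_take_drop_id subseq_rev_drop_many subseq_order.order_refl)
  moreover have "sorted_wrt (>) (take k s)" using so by (rule sorted_wrt_take)
  moreover have "length (take k s) = k" using k unfolding s_def by simp
  ultimately show "has_decr (reading_word T) k" unfolding has_decr_def using ss by (meson subseq_order.order_trans)
qed

theorem has_decr_iff_rsk_length: "distinct w \<Longrightarrow> has_decr w k \<longleftrightarrow> k \<le> length (rsk w)"
  using knuth_equiv_has_decr[OF knuth_equiv_rsk] has_decr_reading_word_iff tableau_rsk by blast

section \<open>Translating the pattern conditions\<close>

lemma chain_less:
  assumes "\<And>j. Suc j < K \<Longrightarrow> f j < f (Suc j)" "a < b" "b < K"
  shows "(f a :: nat) < f b"
  using assms(2,3)
proof (induction b)
  case 0 then show ?case by simp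
next
  case (Suc b)
  show ?case
  proof (cases "a = b")
    case True then show ?thesis using assms(1) Suc.prems by simp
  next
    case False
    then have "f a < f b" using Suc by auto
    also have "f b < f (Suc b)" using assms(1) Suc.prems by simp
    finally show ?thesis .
  qed
qed

lemma chain_greater:
  assumes "\<And>j. Suc j < K \<Longrightarrow> f (Suc j) < f j" "a < b" "b < K"
  shows "(f b :: nat) < f a"
  using assms(2,3)
proof (induction b)
  case 0 then show ?case by simp
next
  case (Suc b)
  show ?case
  proof (cases "a = b")
    case True then show ?thesis using assms(1) Suc.prems by simp
  next
    case False
    then have "f b < f a" using Suc by auto
    moreover have "f (Suc b) < f b" using assms(1) Suc.prems by simp
    ultimately show ?thesis by simp
  qed
qed

lemma perm_graph_point: "q \<in> perm_graph p n \<Longrightarrow> q = (fst q, p (fst q)) \<and> fst q < n"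
  unfolding perm_graph_def by auto

lemma sorted_list_index_fun:
  assumes "sorted_wrt (<) ks" "\<forall>a\<in>set ks. a < (k :: nat)"
  obtains f where "\<And>j. j < length ks \<Longrightarrow> f j = ks ! j" "f (length ks) = k"
    "\<And>j. j < length ks \<Longrightarrow> f j < f (Suc j)"
proof
  let ?f = "\<lambda>j. if j < length ks then ks ! j else k"
  show "?f j < ?f (Suc j)" if "j < length ks" for j
    using that assms by (cases "Suc j < length ks") (auto simp: sorted_wrt_nth_less)
qed auto

lemma has_chain_of_contains_incr:
  assumes "contains_incr n p (L + 1)"
  shows "\<exists>k<n. has_chain (perm_graph p n \<inter> rect k (p k)) L"
proof -
  obtain f where f: "\<forall>j<L + 1. f j < n" "\<forall>j. Suc j < L + 1 \<longrightarrow> f j < f (Suc j) \<and> p (f j) < p (f (Suc j))"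
    using assms unfolding contains_incr_def by blast
  have index_less: "\<And>a b. a < b \<Longrightarrow> b < L + 1 \<Longrightarrow> f a < f b" using chain_less[of "L + 1" f] f(2) by blast
  have value_less: "\<And>a b. a < b \<Longrightarrow> b < L + 1 \<Longrightarrow> p (f a) < p (f b)" using chain_less[of "L + 1" "p \<circ> f"] f(2) by auto
  define C where "C = (\<lambda>j. (f j, p (f j))) ` {..<L}"
  have "inj_on (\<lambda>j. (f j, p (f j))) {..<L}"
  proof (rule inj_onI)
    fix a b assume "a \<in> {..<L}" "b \<in> {..<L}" "(f a, p (f a)) = (f b, p (f b))"
    then show "a = b" using index_less[of a b] index_less[of b a] by (cases a b rule: linorder_cases) auto
  qed
  then have "card C = L" unfolding C_def using card_image by fastforce
  moreover have "C \<subseteq> perm_graph p n \<inter> rect (f L) (p (f L))"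
    unfolding C_def perm_graph_def rect_def using f(1) index_less value_less by auto
  moreover have "ne_chain C"
  proof -
    have "p (f a) < p (f b)" if "a < L" "b < L" "f a < f b" for a b
      using that index_less[of b a] value_less[of a b] by (cases a b rule: linorder_cases) auto
    then show ?thesis unfolding ne_chain_def C_def by auto
  qed
  ultimately show ?thesis using f(1) unfolding has_chain_def C_def by (intro exI[of _ "f L"]) auto
qed

lemma contains_incr_of_has_chain:
  assumes k: "k < n" and C: "C \<subseteq> perm_graph p n \<inter> rect k (p k)" "finite C" "card C = L" "ne_chain C"
  shows "contains_incr n p (L + 1)"
proof -
  define K where "K = fst ` C"
  have mem: "(a, p a) \<in> C" "a < k" "p a < p k" if "a \<in> K" for a
    using that C(1) unfolding K_def perm_graph_def rect_def by auto
  have "inj_on fst C" using C(1) perm_graph_point by (intro inj_onI) (metis IntE subsetD)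
  then have "card K = L" "finite K" unfolding K_def using C(2,3) card_image by auto
  then obtain ks where ks: "length ks = L" "set ks = K" "sorted_wrt (<) ks"
    by (metis sorted_list_of_set.length_sorted_key_list_of_set sorted_list_of_set.set_sorted_key_list_of_set
        sorted_list_of_set.strict_sorted_key_list_of_set)
  obtain f where f: "\<And>j. j < L \<Longrightarrow> f j = ks ! j" "f L = k" "\<And>j. j < L \<Longrightarrow> f j < f (Suc j)"
    using sorted_list_index_fun[OF ks(3)] mem ks by (metis (no_types, lifting))
  have fK: "f j \<in> K" if "j < L" for j using f(1) ks that by (metis nth_mem)
  have "f j < n" if "j < L + 1" for j
  proof (cases "j < L")
    case True
    then show ?thesis using fK[of j] mem(2)[of "f j"] k by (meson less_trans)
  next
    case False
    then show ?thesis using that f(2) k by (simp add: less_Suc_eq)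
  qed
  moreover have "p (f j) < p (f (Suc j))" if "Suc j < L + 1" for j
  proof (cases "Suc j < L")
    case True
    then show ?thesis using ne_chainD[OF C(4) mem(1) mem(1)] fK[of j] fK[of "Suc j"] f(3)[of j] by simp
  next
    case False
    then have "Suc j = L" using that by simp
    then show ?thesis using fK[of j] mem(3)[of "f j"] f(2) by auto
  qed
  ultimately show ?thesis using f(3) unfolding contains_incr_def by auto
qed

lemma contains_incr_iff_has_chain:
  "contains_incr n p (L + 1) \<longleftrightarrow> (\<exists>k<n. has_chain (perm_graph p n \<inter> rect k (p k)) L)"
  using has_chain_of_contains_incr contains_incr_of_has_chain unfolding has_chain_def by blast

lemma subseq_of_sorted_subset:
  assumes "sorted_wrt (<) (ys :: nat list)" "set ys \<subseteq> set xs" "sorted_wrt (<) xs"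
  shows "subseq ys xs"
proof -
  have "filter (\<lambda>z. z \<in> set ys) xs = ys"
  proof (rule sorted_distinct_set_unique)
    have "sorted_wrt (<) (filter (\<lambda>z. z \<in> set ys) xs)" by (rule sorted_wrt_filter[OF assms(3)])
    then show "sorted (filter (\<lambda>z. z \<in> set ys) xs)" "distinct (filter (\<lambda>z. z \<in> set ys) xs)"
      by (auto simp: strict_sorted_iff)
    show "sorted ys" "distinct ys" using assms(1) by (auto simp: strict_sorted_iff)
    show "set (filter (\<lambda>z. z \<in> set ys) xs) = set ys" using assms(2) by auto
  qed
  then show ?thesis by (metis subseq_filter_left)
qed

lemma has_decr_of_contains_dec_pat:
  assumes "contains_dec_pat n p d"
  shows "\<exists>k<n. has_decr (rect_word p k (p k)) d"
proof -
  obtain f where f: "\<forall>j\<le>d. f j < n" "\<forall>j. Suc j \<le> d \<longrightarrow> f j < f (Suc j)"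
    "\<forall>j. Suc j < d \<longrightarrow> p (f (Suc j)) < p (f j)" "p (f 0) < p (f d)"
    using assms unfolding contains_dec_pat_def by blast
  have index_less: "\<And>a b. a < b \<Longrightarrow> b < d + 1 \<Longrightarrow> f a < f b" using chain_less[of "d + 1" f] f(2) by auto
  have value_less: "\<And>a b. a < b \<Longrightarrow> b < d \<Longrightarrow> p (f b) < p (f a)" using chain_greater[of d "p \<circ> f"] f(3) by auto
  define ks where "ks = map f [0..<d]"
  have sks: "sorted_wrt (<) ks" unfolding ks_def sorted_wrt_map
    by (rule sorted_wrt_mono_rel[of _ "(<)"]) (auto intro: index_less simp: sorted_wrt_upt)
  have pf: "\<And>j. j < d \<Longrightarrow> p (f j) < p (f d)"
  proof -
    fix j assume "j < d"
    then have "p (f j) \<le> p (f 0)" using value_less[of 0 j] by (cases j) auto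
    then show "p (f j) < p (f d)" using f(4) by simp
  qed
  have sub: "set ks \<subseteq> set (filter (\<lambda>k. p k < p (f d)) [0..<f d])"
    unfolding ks_def using index_less pf by auto
  have "subseq ks (filter (\<lambda>k. p k < p (f d)) [0..<f d])"
    using subseq_of_sorted_subset[OF sks sub] by (simp add: sorted_wrt_filter)
  then have "subseq (map p ks) (rect_word p (f d) (p (f d)))" unfolding rect_word_def by (rule subseq_map)
  moreover have "sorted_wrt (>) (map p ks)" unfolding ks_def sorted_wrt_map
    by (rule sorted_wrt_mono_rel[of _ "(<)"]) (auto intro: value_less simp: sorted_wrt_upt)
  moreover have "length (map p ks) = d" unfolding ks_def by simp
  ultimately show "\<exists>k<n. has_decr (rect_word p k (p k)) d" using f(1) unfolding has_decr_def by (intro exI[of _ "f d"]) auto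
qed

lemma contains_dec_pat_of_has_decr:
  assumes "d \<ge> 1" "k < n" "has_decr (rect_word p k (p k)) d"
  shows "contains_dec_pat n p d"
proof -
  obtain s where s: "subseq s (rect_word p k (p k))" "sorted_wrt (>) s" "length s = d"
    using assms(3) unfolding has_decr_def by auto
  obtain N where N: "s = nths (rect_word p k (p k)) N" using s(1) subseq_conv_nths by auto
  define ks where "ks = nths (filter (\<lambda>k'. p k' < p k) [0..<k]) N"
  have sN: "s = map p ks" unfolding N ks_def rect_word_def by (simp add: nths_map)
  have "subseq ks (filter (\<lambda>k'. p k' < p k) [0..<k])" unfolding ks_def subseq_conv_nths by blast
  then have sks: "sorted_wrt (<) ks" by (rule subseq_sorted_wrt) (simp add: sorted_wrt_filter)
  have "set ks \<subseteq> set (filter (\<lambda>k'. p k' < p k) [0..<k])" unfolding ks_def by (rule set_nths_subset)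
  then have inks: "a < k" "p a < p k" if "a \<in> set ks" for a using that by auto
  have lks: "length ks = d" using sN s(3) by simp
  obtain f where f: "\<And>j. j < d \<Longrightarrow> f j = ks ! j" "f d = k" "\<And>j. j < d \<Longrightarrow> f j < f (Suc j)"
    using sorted_list_index_fun[OF sks] inks lks by (metis (no_types, lifting))
  have fks: "f j \<in> set ks" if "j < d" for j using f(1) lks that by (metis nth_mem)
  have "f j < n" if "j \<le> d" for j
    using that f(2) fks[of j] inks(1)[of "f j"] assms(2) by (cases "j < d") auto
  moreover have "p (f (Suc j)) < p (f j)" if "Suc j < d" for j
  proof -
    have "map p ks ! Suc j < map p ks ! j"
      by (rule sorted_wrt_nth_less[of "(>)"]) (use that lks s(2) sN in auto)
    then show ?thesis using that lks f(1) by simp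
  qed
  moreover have "p (f 0) < p (f d)" using fks[of 0] inks f(2) assms(1) by auto
  ultimately show ?thesis using f(3) unfolding contains_dec_pat_def by (intro exI[of _ f]) (auto simp: Suc_le_eq)
qed

lemma contains_dec_pat_iff_has_decr:
  "d \<ge> 1 \<Longrightarrow> contains_dec_pat n p d \<longleftrightarrow> (\<exists>k<n. has_decr (rect_word p k (p k)) d)"
  using has_decr_of_contains_dec_pat contains_dec_pat_of_has_decr by blast

section \<open>Permutations and their Ferrers boards\<close>

definition perm_board :: "(nat \<Rightarrow> nat) \<Rightarrow> nat \<Rightarrow> (nat \<times> nat) set" where
  "perm_board p n = {(i, v). \<exists>k<n. i < k \<and> v < p k}"

definition perm_filling :: "(nat \<Rightarrow> nat) \<Rightarrow> nat \<Rightarrow> (nat \<times> nat) set" where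
  "perm_filling p n = perm_graph p n \<inter> perm_board p n"

lemma permutes_lessThan_facts:
  fixes p :: "nat \<Rightarrow> nat"
  assumes "p permutes {0..<n}"
  shows "inj_on p {..<n}" "\<And>k. k < n \<Longrightarrow> p k < n" "\<And>k. n \<le> k \<Longrightarrow> p k = k"
proof -
  show "inj_on p {..<n}" by (rule permutes_inj_on[OF assms])
  show "\<And>k. k < n \<Longrightarrow> p k < n"
  proof -
    fix k assume "k < n"
    then have "k \<in> {0..<n}" by simp
    then have "p k \<in> {0..<n}" by (simp only: permutes_in_image[OF assms])
    then show "p k < n" by simp
  qed
  show "\<And>k. n \<le> k \<Longrightarrow> p k = k"
  proof -
    fix k assume "n \<le> k"
    then have "k \<notin> {0..<n}" by simp
    then show "p k = k" by (rule permutes_not_in[OF assms])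
  qed
qed

lemma perm_board_subset: "p permutes {0..<n} \<Longrightarrow> perm_board p n \<subseteq> {..<n} \<times> {..<n}"
  unfolding perm_board_def using permutes_lessThan_facts(2) by (auto intro: less_trans)

lemma finite_perm_board: "p permutes {0..<n} \<Longrightarrow> finite (perm_board p n)"
  using perm_board_subset by (meson finite_SigmaI finite_lessThan finite_subset)

lemma down_closed_perm_board: "down_closed (perm_board p n)"
  unfolding down_closed_def perm_board_def by (auto intro: le_less_trans)

lemma perm_filling_subset: "perm_filling p n \<subseteq> perm_board p n" unfolding perm_filling_def by auto

lemma partial_perm_perm_filling: "p permutes {0..<n} \<Longrightarrow> partial_perm (perm_filling p n)"
  using partial_perm_graph[OF permutes_lessThan_facts(1)] unfolding perm_filling_def partial_perm_def by auto

lemma border_rect_subset: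
  assumes "down_closed D" "c \<in> border D"
  shows "rect (fst c) (snd c) \<subseteq> D"
proof
  fix q assume q: "q \<in> rect (fst c) (snd c)"
  then have c: "(fst c - 1, snd c - 1) \<in> D" using assms(2) unfolding border_def rect_def by auto
  have "fst q \<le> fst c - 1" "snd q \<le> snd c - 1" using q unfolding rect_def by auto
  then show "q \<in> D" using down_closedD[OF assms(1) c, of "fst q" "snd q"] by simp
qed

lemma growth_perm_graph_border:
  assumes "c \<in> border (perm_board p n)"
  shows "growth (perm_graph p n) (fst c) (snd c) = growth_at (perm_filling p n) c"
proof -
  have "rect (fst c) (snd c) \<subseteq> perm_board p n" using border_rect_subset[OF down_closed_perm_board assms] .
  then have "perm_graph p n \<inter> rect (fst c) (snd c) = perm_filling p n \<inter> rect (fst c) (snd c)" unfolding perm_filling_def by auto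
  then show ?thesis unfolding growth_at_def by (rule growth_local)
qed

lemma conjugate_shape_0:
  assumes "tableau T"
  shows "conjugate (shape T) 0 = length T"
proof -
  have "T ! r \<noteq> []" if "r < length T" for r using assms that nth_mem unfolding tableau_def by blast
  then have "{r. 0 < shape T r} = {..<length T}" unfolding shape_def by auto
  then show ?thesis unfolding conjugate_def by simp
qed

lemma Sdl_iff_in_box_at_points:
  assumes p: "p permutes {0..<n}" and d: "d \<ge> 1"
  shows "p \<in> Sdl n d L \<longleftrightarrow> (\<forall>k<n. in_box d L (growth (perm_graph p n) k (p k)))"
proof -
  let ?g = "\<lambda>k. growth (perm_graph p n) k (p k)"
  have inj: "inj_on p {..<n}" using permutes_lessThan_facts[OF p] by simp
  have G: "partial_perm (perm_graph p n)" using partial_perm_graph[OF inj] .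
  have row: "?g k 0 < L \<longleftrightarrow> \<not> has_chain (perm_graph p n \<inter> rect k (p k)) L" for k
    using growth_0_iff_has_chain[OF G, of L] by (simp add: not_le[symmetric])
  have incr: "\<not> contains_incr n p (L + 1) \<longleftrightarrow> (\<forall>k<n. ?g k 0 < L)"
    unfolding row using contains_incr_iff_has_chain[of n p] by blast
  have col: "has_decr (rect_word p k (p k)) d \<longleftrightarrow> d \<le> conjugate (?g k) 0" if "k < n" for k
  proof -
    have "distinct (rect_word p k (p k))" using distinct_rect_word[OF inj] that by simp
    then show ?thesis
      using growth_eq_shape_rsk[OF inj, of k] that conjugate_shape_0 tableau_rsk has_decr_iff_rsk_length by auto
  qed
  have decr: "\<not> contains_dec_pat n p d \<longleftrightarrow> (\<forall>k<n. conjugate (?g k) 0 < d)"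
    using contains_dec_pat_iff_has_decr[OF d] col by (auto simp: not_le)
  show ?thesis unfolding Sdl_def in_box_def using incr decr p by auto
qed

lemma border_perm_board_below_point:
  assumes "c \<in> border (perm_board p n)" "fst c \<noteq> 0" "snd c \<noteq> 0"
  obtains k where "k < n" "fst c \<le> k" "snd c \<le> p k"
proof -
  have "(fst c - 1, snd c - 1) \<in> perm_board p n" using assms unfolding border_def by auto
  then show ?thesis using that assms(2,3) unfolding perm_board_def by fastforce
qed

lemma perm_board_max_right:
  assumes "k < n"
  obtains km where "k \<le> km" "km < n" "p k \<le> p km" "(km, p km) \<notin> perm_board p n"
    "(k, p km) \<in> border (perm_board p n)"
proof -
  define M where "M = Max (p ` {k..<n})"
  have "M \<in> p ` {k..<n}" unfolding M_def using assms by (intro Max_in) auto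
  then obtain km where km: "k \<le> km" "km < n" "p km = M" by auto
  have le: "p k' \<le> p km" if "k \<le> k'" "k' < n" for k'
    unfolding km(3) M_def using that by (intro Max_ge) auto
  have notin: "(i, p km) \<notin> perm_board p n" if "k \<le> i" for i
  proof
    assume "(i, p km) \<in> perm_board p n"
    then obtain k' where "k' < n" "i < k'" "p km < p k'" unfolding perm_board_def by auto
    then show False using le[of k'] that by simp
  qed
  have "(k, p km) \<in> border (perm_board p n)"
    using notin[of k] km unfolding border_def perm_board_def by auto
  then show ?thesis using that km le[of k] notin[of km] assms by auto
qed

text \<open>The shapes at the points of the graph dominate those on the border of the board, so both
  sets of labels witness the same bounds.\<close>

lemma Sdl_iff_in_box_on_border:
  assumes p: "p permutes {0..<n}" and d: "d \<ge> 1" and L: "L \<ge> 1"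
  shows "p \<in> Sdl n d L \<longleftrightarrow> (\<forall>c\<in>border (perm_board p n). in_box d L (growth_at (perm_filling p n) c))"
proof -
  let ?g = "growth (perm_graph p n)"
  have G: "partial_perm (perm_graph p n)" using partial_perm_graph permutes_lessThan_facts(1)[OF p] by blast
  have mono: "in_box d L (?g x y)" if "in_box d L (?g x' y')" "x \<le> x'" "y \<le> y'" for x y x' y'
    using in_box_mono growth_mono[OF G] growth_partition[OF G] that by blast
  have "(\<forall>k<n. in_box d L (?g k (p k))) \<longleftrightarrow> (\<forall>c\<in>border (perm_board p n). in_box d L (?g (fst c) (snd c)))"
  proof
    assume A: "\<forall>k<n. in_box d L (?g k (p k))"
    show "\<forall>c\<in>border (perm_board p n). in_box d L (?g (fst c) (snd c))"
    proof
      fix c assume c: "c \<in> border (perm_board p n)"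
      show "in_box d L (?g (fst c) (snd c))"
      proof (cases "fst c = 0 \<or> snd c = 0")
        case True
        then have "?g (fst c) (snd c) = empty_shape" by (metis growth.simps(1) growth_0_right)
        then show ?thesis using d L conjugate_empty unfolding in_box_def by (simp add: empty_shape_def)
      next
        case False
        then obtain k where "k < n" "fst c \<le> k" "snd c \<le> p k"
          using border_perm_board_below_point[OF c] by blast
        then show ?thesis using A mono by blast
      qed
    qed
  next
    assume B: "\<forall>c\<in>border (perm_board p n). in_box d L (?g (fst c) (snd c))"
    show "\<forall>k<n. in_box d L (?g k (p k))"
    proof (intro allI impI)
      fix k assume "k < n"
      then obtain km where "p k \<le> p km" "(k, p km) \<in> border (perm_board p n)"
        using perm_board_max_right by blast
      then show "in_box d L (?g k (p k))" using B mono[of k "p km" k "p k"] by auto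
    qed
  qed
  then show ?thesis using Sdl_iff_in_box_at_points[OF p d] growth_perm_graph_border by auto
qed
section \<open>Refilling the board of a permutation\<close>

lemma perm_graph_eqD:
  assumes "p permutes {0..<n}" "q permutes {0..<n}" "perm_graph p n = perm_graph q n"
  shows "p = q"
proof
  fix k
  show "p k = q k"
  proof (cases "k < n")
    case True
    then have "(k, p k) \<in> perm_graph q n" using assms(3) unfolding perm_graph_def by auto
    then show ?thesis using perm_graph_point by fastforce
  qed (use permutes_lessThan_facts(3)[OF assms(1)] permutes_lessThan_facts(3)[OF assms(2)] in auto)
qed

lemma permutes_if_partial_perm_graph:
  assumes "partial_perm (perm_graph q n)" "\<And>k. k < n \<Longrightarrow> q k < n" "\<And>k. n \<le> k \<Longrightarrow> q k = k"
  shows "q permutes {0..<n}"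
proof (rule bij_imp_permutes)
  have inj: "inj_on q {0..<n}"
  proof (rule inj_onI)
    fix a b assume "a \<in> {0..<n}" "b \<in> {0..<n}" "q a = q b"
    then have "(a, q a) \<in> perm_graph q n" "(b, q b) \<in> perm_graph q n" "snd (a, q a) = snd (b, q b)"
      unfolding perm_graph_def by auto
    then show "a = b" using partial_permD[OF assms(1)] by blast
  qed
  moreover have "q ` {0..<n} \<subseteq> {0..<n}" using assms(2) by auto
  ultimately show "bij_betw q {0..<n} {0..<n}" unfolding bij_betw_def by (simp add: endo_inj_surj)
qed (use assms(3) in auto)

lemma involution_iff_perm_graph_sym:
  assumes "p permutes {0..<n}"
  shows "p \<circ> p = id \<longleftrightarrow> (\<forall>a b. (a, b) \<in> perm_graph p n \<longrightarrow> (b, a) \<in> perm_graph p n)"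
proof
  assume "p \<circ> p = id"
  then show "\<forall>a b. (a, b) \<in> perm_graph p n \<longrightarrow> (b, a) \<in> perm_graph p n"
    using permutes_lessThan_facts(2)[OF assms] unfolding perm_graph_def by (force simp: fun_eq_iff)
next
  assume sym: "\<forall>a b. (a, b) \<in> perm_graph p n \<longrightarrow> (b, a) \<in> perm_graph p n"
  show "p \<circ> p = id"
  proof
    fix k
    show "(p \<circ> p) k = id k"
    proof (cases "k < n")
      case True
      then have "(p k, k) \<in> perm_graph p n" using sym unfolding perm_graph_def by auto
      then show ?thesis using perm_graph_point by fastforce
    qed (use permutes_lessThan_facts(3)[OF assms] in auto)
  qed
qed

lemma perm_board_sym:
  assumes "p permutes {0..<n}" "p \<circ> p = id" "(i, v) \<in> perm_board p n"
  shows "(v, i) \<in> perm_board p n"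
proof -
  obtain k where k: "k < n" "i < k" "v < p k" using assms(3) unfolding perm_board_def by auto
  then have "p (p k) = k" "p k < n" using assms(2) permutes_lessThan_facts(2)[OF assms(1)] by (auto simp: fun_eq_iff)
  then show ?thesis using k unfolding perm_board_def by auto
qed

lemma perm_board_eq:
  assumes "\<And>k. k < n \<Longrightarrow> (k, p k) \<notin> perm_board p n \<Longrightarrow> q k = p k"
    and "\<And>k. k < n \<Longrightarrow> (k, p k) \<in> perm_board p n \<Longrightarrow> (k, q k) \<in> perm_board p n"
  shows "perm_board q n = perm_board p n"
proof (intro set_eqI iffI)
  fix z assume "z \<in> perm_board q n"
  then obtain i v k where z: "z = (i, v)" "k < n" "i < k" "v < q k" unfolding perm_board_def by auto
  show "z \<in> perm_board p n"
  proof (cases "(k, p k) \<in> perm_board p n")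
    case True
    then obtain k' where "k' < n" "k < k'" "q k < p k'" using assms(2) z(2) unfolding perm_board_def by auto
    then show ?thesis using z unfolding perm_board_def by auto
  next
    case False
    then show ?thesis using assms(1) z unfolding perm_board_def by auto
  qed
next
  fix z assume "z \<in> perm_board p n"
  then obtain i v k where z: "z = (i, v)" "k < n" "i < k" "v < p k" unfolding perm_board_def by auto
  obtain km where "k \<le> km" "km < n" "p k \<le> p km" "(km, p km) \<notin> perm_board p n"
    using perm_board_max_right[OF z(2)] .
  then show "z \<in> perm_board q n" using assms(1) z unfolding perm_board_def by force
qed

text \<open>The permutation that agrees with \<open>p\<close> off its board and has the points of \<open>Y\<close> on it
  (junk, via \<open>THE\<close>, unless \<open>Y\<close> occupies the same columns as the filling of \<open>p\<close>).\<close>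

definition refill :: "(nat \<Rightarrow> nat) \<Rightarrow> nat \<Rightarrow> (nat \<times> nat) set \<Rightarrow> nat \<Rightarrow> nat" where
  "refill p n Y k = (if k < n \<and> (k, p k) \<in> perm_board p n then (THE y. (k, y) \<in> Y) else p k)"

context
  fixes p n Y
  assumes p: "p permutes {0..<n}" and Y: "Y \<subseteq> perm_board p n" "partial_perm Y"
    and cols: "\<And>k. (\<exists>y. (k, y) \<in> Y) \<longleftrightarrow> (\<exists>y. (k, y) \<in> perm_filling p n)"
    and rows: "\<And>y. (\<exists>x. (x, y) \<in> Y) \<longleftrightarrow> (\<exists>x. (x, y) \<in> perm_filling p n)"
begin

lemma perm_graph_refill: "perm_graph (refill p n Y) n = Y \<union> (perm_graph p n - perm_board p n)"
proof -
  have col: "(\<exists>y. (k, y) \<in> Y) \<longleftrightarrow> k < n \<and> (k, p k) \<in> perm_board p n" for k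
    using cols unfolding perm_filling_def perm_graph_def by auto
  have the: "(k, refill p n Y k) \<in> Y" if "(k, y) \<in> Y" for k y
  proof -
    have "(THE y. (k, y) \<in> Y) = y" using that partial_permD[OF Y(2)] by (intro the_equality) auto
    then show ?thesis using that col unfolding refill_def by auto
  qed
  show ?thesis
  proof (intro set_eqI iffI)
    fix z assume "z \<in> perm_graph (refill p n Y) n"
    then obtain k where k: "k < n" "z = (k, refill p n Y k)" unfolding perm_graph_def by auto
    show "z \<in> Y \<union> (perm_graph p n - perm_board p n)"
    proof (cases "(k, p k) \<in> perm_board p n")
      case True
      then obtain y where "(k, y) \<in> Y" using col[of k] k(1) by auto
      then show ?thesis using the k by auto
    next
      case False
      then show ?thesis using k unfolding refill_def perm_graph_def by auto
    qed
  next
    fix z assume z: "z \<in> Y \<union> (perm_graph p n - perm_board p n)"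
    show "z \<in> perm_graph (refill p n Y) n"
    proof (cases "z \<in> Y")
      case True
      obtain k y where z: "z = (k, y)" by (cases z)
      then have "(k, refill p n Y k) \<in> Y" using the True by auto
      then have "refill p n Y k = y" using partial_permD[OF Y(2)] True z by fastforce
      moreover have "k < n" using col[of k] True z by auto
      ultimately show ?thesis using z unfolding perm_graph_def by auto
    next
      case False
      then show ?thesis using z unfolding perm_graph_def refill_def by auto
    qed
  qed
qed

lemma partial_perm_refill: "partial_perm (Y \<union> (perm_graph p n - perm_board p n))"
proof -
  have G: "partial_perm (perm_graph p n)" using partial_perm_graph permutes_lessThan_facts(1)[OF p] by blast
  have sep: False if a: "a \<in> Y" and b: "b \<in> perm_graph p n - perm_board p n"
    and ab: "fst a = fst b \<or> snd a = snd b" for a b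
  proof -
    obtain c where c: "c \<in> perm_filling p n" "fst c = fst b \<or> snd c = snd b"
    proof (cases "fst a = fst b")
      case True
      obtain y where "(fst a, y) \<in> perm_filling p n" using cols[of "fst a"] a by (metis prod.collapse)
      then show thesis using that[of "(fst a, y)"] True by simp
    next
      case False
      obtain x where "(x, snd a) \<in> perm_filling p n" using rows[of "snd a"] a by (metis prod.collapse)
      then show thesis using that[of "(x, snd a)"] False ab by simp
    qed
    then have "c = b" using b partial_permD[OF G, of c b] unfolding perm_filling_def by blast
    then show False using c(1) b unfolding perm_filling_def by blast
  qed
  show ?thesis unfolding partial_perm_def
  proof (intro ballI impI)
    fix a b assume a: "a \<in> Y \<union> (perm_graph p n - perm_board p n)" and b: "b \<in> Y \<union> (perm_graph p n - perm_board p n)"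
      and ab: "fst a = fst b \<or> snd a = snd b"
    consider "a \<in> Y" "b \<in> Y" | "a \<in> Y" "b \<in> perm_graph p n - perm_board p n"
      | "a \<in> perm_graph p n - perm_board p n" "b \<in> Y"
      | "a \<in> perm_graph p n - perm_board p n" "b \<in> perm_graph p n - perm_board p n"
      using a b by blast
    then show "a = b"
    proof cases
      case 1 then show ?thesis using partial_permD[OF Y(2)] ab by blast
    next
      case 2 then show ?thesis using sep ab by blast
    next
      case 3 then show ?thesis using sep[of b a] ab by auto
    next
      case 4 then show ?thesis using partial_permD[OF G] ab by blast
    qed
  qed
qed

lemma refill_permutes: "refill p n Y permutes {0..<n}"
proof (rule permutes_if_partial_perm_graph)
  show "partial_perm (perm_graph (refill p n Y) n)" using partial_perm_refill perm_graph_refill by simp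
  show "refill p n Y k < n" if "k < n" for k
  proof -
    have "(k, refill p n Y k) \<in> Y \<union> (perm_graph p n - perm_board p n)"
      using that perm_graph_refill unfolding perm_graph_def by blast
    then show ?thesis using Y(1) perm_board_subset[OF p] permutes_lessThan_facts(2)[OF p] that
      unfolding perm_graph_def by auto
  qed
  show "refill p n Y k = k" if "n \<le> k" for k
    using that permutes_lessThan_facts(3)[OF p] unfolding refill_def by auto
qed

lemma perm_board_refill: "perm_board (refill p n Y) n = perm_board p n"
proof (rule perm_board_eq)
  show "refill p n Y k = p k" if "(k, p k) \<notin> perm_board p n" for k
    using that unfolding refill_def by auto
  show "(k, refill p n Y k) \<in> perm_board p n" if "k < n" "(k, p k) \<in> perm_board p n" for k
  proof -
    have "(k, refill p n Y k) \<in> Y \<union> (perm_graph p n - perm_board p n)"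
      using that perm_graph_refill unfolding perm_graph_def by blast
    then show ?thesis using that Y(1) unfolding refill_def perm_graph_def by auto
  qed
qed

lemma perm_filling_refill: "perm_filling (refill p n Y) n = Y"
  unfolding perm_filling_def perm_board_refill perm_graph_refill using Y(1) by auto

end

lemma filling_swap_eq:
  assumes D: "finite D" "down_closed D" "\<And>i v. (i, v) \<in> D \<Longrightarrow> (v, i) \<in> D"
    and Y: "Y \<subseteq> D" "partial_perm Y" "\<forall>c\<in>border D. growth_at Y (prod.swap c) = growth_at Y c"
  shows "prod.swap ` Y = Y"
proof (rule filling_unique[OF D(1,2) _ Y(1) _ Y(2)])
  show "prod.swap ` Y \<subseteq> D" using Y(1) D(3) by auto
  show "partial_perm (prod.swap ` Y)" using Y(2) unfolding partial_perm_def by auto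
  show "\<forall>c\<in>border D. growth_at (prod.swap ` Y) c = growth_at Y c"
    using Y(3) growth_swap unfolding growth_at_def by (metis fst_swap snd_swap)
qed

text \<open>The heart of the bijection: conjugate every border label of the filling of \<open>p\<close> and refill
  the board with the filling these labels determine.\<close>

lemma conjugate_perm_exists:
  assumes p: "p permutes {0..<n}"
  obtains q where "q permutes {0..<n}" "perm_board q n = perm_board p n"
    "\<forall>c\<in>border (perm_board p n). growth_at (perm_filling q n) c = conjugate (growth_at (perm_filling p n) c)"
    "perm_graph q n - perm_board q n = perm_graph p n - perm_board p n"
    "p \<circ> p = id \<Longrightarrow> q \<circ> q = id"
proof -
  define D X where "D = perm_board p n" and "X = perm_filling p n"
  have D: "finite D" "down_closed D" unfolding D_def using finite_perm_board[OF p] down_closed_perm_board by auto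
  have X: "X \<subseteq> D" "partial_perm X"
    unfolding X_def D_def using perm_filling_subset partial_perm_perm_filling[OF p] by auto
  obtain Y where Y: "Y \<subseteq> D" "partial_perm Y" "\<forall>c\<in>border D. growth_at Y c = conjugate (growth_at X c)"
    using filling_exists[OF D valid_labelling_conjugate[OF valid_labelling_growth[OF X(2)]]] by auto
  have refill: "Y \<subseteq> perm_board p n" "partial_perm Y"
    "\<And>k. (\<exists>y. (k, y) \<in> Y) \<longleftrightarrow> (\<exists>y. (k, y) \<in> perm_filling p n)"
    "\<And>y. (\<exists>x. (x, y) \<in> Y) \<longleftrightarrow> (\<exists>x. (x, y) \<in> perm_filling p n)"
    using Y(1,2) conjugate_filling_same_lines[OF D X Y] unfolding D_def X_def by auto
  define q where "q = refill p n Y"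
  have q: "q permutes {0..<n}" "perm_board q n = D" "perm_filling q n = Y"
    "perm_graph q n = Y \<union> (perm_graph p n - D)"
    unfolding q_def D_def
    by (fact refill_permutes[OF p refill] perm_board_refill[OF p refill] perm_filling_refill[OF p refill]
        perm_graph_refill[OF p refill])+
  have "q \<circ> q = id" if inv: "p \<circ> p = id"
  proof -
    have Dsym: "(v, i) \<in> D" if "(i, v) \<in> D" for i v using perm_board_sym[OF p inv] that unfolding D_def .
    have Gsym: "(b, a) \<in> perm_graph p n" if "(a, b) \<in> perm_graph p n" for a b
      using involution_iff_perm_graph_sym[OF p] inv that by blast
    have "prod.swap ` X = X" using Dsym Gsym unfolding X_def perm_filling_def D_def by force
    then have "growth_at X (prod.swap c) = growth_at X c" for c
      unfolding growth_at_def using growth_swap[of X] by (metis fst_swap snd_swap)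
    moreover have "prod.swap c \<in> border D" if "c \<in> border D" for c using that Dsym unfolding border_def by auto
    ultimately have "prod.swap ` Y = Y" using filling_swap_eq[OF D Dsym Y(1,2)] Y(3) by simp
    then have Ysym: "(b, a) \<in> Y" if "(a, b) \<in> Y" for a b using that by (metis image_eqI swap_simp)
    have "(b, a) \<in> perm_graph q n" if "(a, b) \<in> perm_graph q n" for a b
      using that q(4) Dsym Gsym Ysym by blast
    then show ?thesis using involution_iff_perm_graph_sym[OF q(1)] by blast
  qed
  then show ?thesis using that q Y(1,3) unfolding D_def X_def by blast
qed

section \<open>The bijection\<close>

lemma perm_eq_of_border_labels:
  assumes p: "p permutes {0..<n}" and q: "q permutes {0..<n}"
    and board: "perm_board q n = perm_board p n"
    and labels: "\<forall>c\<in>border (perm_board p n). growth_at (perm_filling q n) c = growth_at (perm_filling p n) c"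
    and outside: "perm_graph q n - perm_board q n = perm_graph p n - perm_board p n"
  shows "q = p"
proof -
  have "perm_filling q n = perm_filling p n"
    using filling_unique[OF finite_perm_board[OF p] down_closed_perm_board _ perm_filling_subset
        partial_perm_perm_filling[OF q] partial_perm_perm_filling[OF p] labels]
      perm_filling_subset[of q n] board by auto
  then have "perm_graph q n = perm_graph p n" using outside board unfolding perm_filling_def by blast
  then show ?thesis using perm_graph_eqD[OF q p] by blast
qed

lemma Sdl_Idl_conjugate_perm:
  assumes d: "d \<ge> 1" and L: "L \<ge> 1"
  obtains F where "inj_on F {p. p permutes {0..<n}}" "F ` Sdl n d L \<subseteq> Sdl n L d" "F ` Idl n d L \<subseteq> Idl n L d"
proof -
  define R where "R p q \<longleftrightarrow> q permutes {0..<n} \<and> perm_board q n = perm_board p n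
     \<and> (\<forall>c\<in>border (perm_board p n). growth_at (perm_filling q n) c = conjugate (growth_at (perm_filling p n) c))
     \<and> perm_graph q n - perm_board q n = perm_graph p n - perm_board p n \<and> (p \<circ> p = id \<longrightarrow> q \<circ> q = id)"
    for p q
  define F where "F p = (SOME q. R p q)" for p
  have F: "R p (F p)" if p: "p permutes {0..<n}" for p
  proof -
    obtain q where "q permutes {0..<n}" "perm_board q n = perm_board p n"
      "\<forall>c\<in>border (perm_board p n). growth_at (perm_filling q n) c = conjugate (growth_at (perm_filling p n) c)"
      "perm_graph q n - perm_board q n = perm_graph p n - perm_board p n" "p \<circ> p = id \<Longrightarrow> q \<circ> q = id"
      using conjugate_perm_exists[OF p] by blast
    then have "R p q" unfolding R_def by blast
    then show ?thesis unfolding F_def by (rule someI[where P = "R p"])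
  qed
  have labels: "is_partition (growth_at (perm_filling p n) c)" if "p permutes {0..<n}" for p c
    using growth_partition[OF partial_perm_perm_filling[OF that]] unfolding growth_at_def .
  have "inj_on F {p. p permutes {0..<n}}"
  proof (rule inj_onI)
    fix p1 p2 assume p: "p1 \<in> {p. p permutes {0..<n}}" "p2 \<in> {p. p permutes {0..<n}}" and eq: "F p1 = F p2"
    then have R: "R p1 (F p1)" "R p2 (F p1)" using F[of p1] F[of p2] unfolding eq by auto
    then have "\<forall>c\<in>border (perm_board p1 n). growth_at (perm_filling p2 n) c = growth_at (perm_filling p1 n) c"
      using conjugate_inj labels p unfolding R_def by (metis mem_Collect_eq)
    then show "p1 = p2" using perm_eq_of_border_labels p R unfolding R_def by (metis mem_Collect_eq)
  qed
  moreover have S: "F p \<in> Sdl n L d" if "p \<in> Sdl n d L" for p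
  proof -
    have p: "p permutes {0..<n}" using that unfolding Sdl_def by auto
    then have "\<forall>c\<in>border (perm_board (F p) n). in_box L d (growth_at (perm_filling (F p) n) c)"
      using F[OF p] Sdl_iff_in_box_on_border[OF p d L] that in_box_conjugate labels[OF p] unfolding R_def by auto
    then show ?thesis using Sdl_iff_in_box_on_border[of "F p" n L d] F[OF p] L d unfolding R_def by blast
  qed
  moreover have "F p \<in> Idl n L d" if "p \<in> Idl n d L" for p
    using that S F unfolding Idl_def Sdl_def R_def by auto
  ultimately show ?thesis using that unfolding Sdl_def Idl_def by blast
qed

lemma card_Sdl_Idl_le:
  assumes "d \<ge> 1" "L \<ge> 1"
  shows "card (Sdl n d L) \<le> card (Sdl n L d) \<and> card (Idl n d L) \<le> card (Idl n L d)"
proof -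
  obtain F where F: "inj_on F {p. p permutes {0..<n}}" "F ` Sdl n d L \<subseteq> Sdl n L d" "F ` Idl n d L \<subseteq> Idl n L d"
    using Sdl_Idl_conjugate_perm[OF assms] .
  have fin: "finite (Sdl n L d)" "finite (Idl n L d)"
    using finite_permutations[of "{0..<n}"] unfolding Idl_def Sdl_def by (auto intro: finite_subset)
  have "inj_on F (Sdl n d L)" "inj_on F (Idl n d L)"
    using F(1) by (auto simp: Sdl_def Idl_def intro: inj_on_subset)
  then show ?thesis using card_inj_on_le F(2,3) fin by blast
qed

theorem corollary10p2:
  fixes n d L :: nat
  assumes "n \<ge> 1" and "d \<ge> 1" and "L \<ge> 1"
  shows "card (Sdl n d L) = card (Sdl n L d) \<and> card (Idl n d L) = card (Idl n L d)"
  using card_Sdl_Idl_le[OF assms(2,3), of n] card_Sdl_Idl_le[OF assms(3,2), of n] by auto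

end
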